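(* Let $S$ and $T$ be totally ordered sets, $x\in S$, $y\in T$, and let $Q$ be one of the subposets of $S\times T$ (product order) $$(x,y)^{\rightleftarrows}=\big(\{x\}\times\{t\in T:t\le y\}\big)\cup\big(\{s\in S:s\le x\}\times\{y\}\big),\qquad (x,y)^{\leftrightarrows}=\big(\{x\}\times\{t\in T:t\ge y\}\big)\cup\big(\{s\in S:s\ge x\}\times\{y\}\big).$$ If $M\colon Q\to\mathbf{Vec}$ is pointwise finite-dimensional and indecomposable, then $M\cong k_I$ for some interval $I\subseteq Q$.
   Context: Persistence modules over a poset are functors to $k$-vector spaces. An interval in $Q$ is a non-empty subset that is convex ($p\le q\le r$ with $p,r$ in it implies $q$ in it) and connected (any two elements are joined by a finite sequence of elements of the subset with consecutive elements comparable). $k_I$ is $k$ at points of $I$, $0$ elsewhere, with identity maps between points of $I$ and zero maps otherwise. *)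

theory Defs
  imports Main HOL.Vector_Spaces "HOL-Library.Product_Order"
begin

text \<open>All vector spaces of a module are realised as
subspaces of one ambient k-vector space 'v (with scalar multiplication sc);
the structure maps are f q r : V q -> V r for q <= r.\<close>

definition pmod ::
  "('k::field \<Rightarrow> 'v::ab_group_add \<Rightarrow> 'v) \<Rightarrow> 'q::order set \<Rightarrow> ('q \<Rightarrow> 'v set)
   \<Rightarrow> ('q \<Rightarrow> 'q \<Rightarrow> 'v \<Rightarrow> 'v) \<Rightarrow> bool" where
  "pmod sc Q V f \<longleftrightarrow>
     (\<forall>q\<in>Q. module.subspace sc (V q)) \<and>
     (\<forall>q\<in>Q. \<forall>r\<in>Q. q \<le> r \<longrightarrow>
        (\<forall>v\<in>V q. f q r v \<in> V r) \<and>
        (\<forall>u\<in>V q. \<forall>v\<in>V q. f q r (u + v) = f q r u + f q r v) \<and>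
        (\<forall>c. \<forall>v\<in>V q. f q r (sc c v) = sc c (f q r v))) \<and>
     (\<forall>q\<in>Q. \<forall>v\<in>V q. f q q v = v) \<and>
     (\<forall>q\<in>Q. \<forall>r\<in>Q. \<forall>s\<in>Q. q \<le> r \<longrightarrow> r \<le> s \<longrightarrow>
        (\<forall>v\<in>V q. f r s (f q r v) = f q s v))"

definition pfd ::
  "('k::field \<Rightarrow> 'v::ab_group_add \<Rightarrow> 'v) \<Rightarrow> 'q set \<Rightarrow> ('q \<Rightarrow> 'v set) \<Rightarrow> bool" where
  "pfd sc Q V \<longleftrightarrow> (\<forall>q\<in>Q. \<exists>B. finite B \<and> B \<subseteq> V q \<and> module.span sc B = V q)"

definition submod ::
  "('k::field \<Rightarrow> 'v::ab_group_add \<Rightarrow> 'v) \<Rightarrow> 'q::order set \<Rightarrow> ('q \<Rightarrow> 'v set)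
   \<Rightarrow> ('q \<Rightarrow> 'q \<Rightarrow> 'v \<Rightarrow> 'v) \<Rightarrow> ('q \<Rightarrow> 'v set) \<Rightarrow> bool" where
  "submod sc Q V f A \<longleftrightarrow>
     (\<forall>q\<in>Q. module.subspace sc (A q) \<and> A q \<subseteq> V q) \<and>
     (\<forall>q\<in>Q. \<forall>r\<in>Q. q \<le> r \<longrightarrow> (\<forall>v\<in>A q. f q r v \<in> A r))"

definition indecomposable ::
  "('k::field \<Rightarrow> 'v::ab_group_add \<Rightarrow> 'v) \<Rightarrow> 'q::order set \<Rightarrow> ('q \<Rightarrow> 'v set)
   \<Rightarrow> ('q \<Rightarrow> 'q \<Rightarrow> 'v \<Rightarrow> 'v) \<Rightarrow> bool" where
  "indecomposable sc Q V f \<longleftrightarrow>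
     pmod sc Q V f \<and> (\<exists>q\<in>Q. V q \<noteq> {0}) \<and>
     (\<forall>A B. submod sc Q V f A \<and> submod sc Q V f B \<and>
        (\<forall>q\<in>Q. \<forall>v\<in>V q. \<exists>a\<in>A q. \<exists>b\<in>B q. v = a + b) \<and>
        (\<forall>q\<in>Q. A q \<inter> B q = {0})
        \<longrightarrow> (\<forall>q\<in>Q. A q = {0}) \<or> (\<forall>q\<in>Q. B q = {0}))"

definition pmod_iso ::
  "('k::field \<Rightarrow> 'v::ab_group_add \<Rightarrow> 'v) \<Rightarrow> 'q::order set \<Rightarrow> ('q \<Rightarrow> 'v set)
   \<Rightarrow> ('q \<Rightarrow> 'q \<Rightarrow> 'v \<Rightarrow> 'v)
   \<Rightarrow> ('k \<Rightarrow> 'w::ab_group_add \<Rightarrow> 'w) \<Rightarrow> ('q \<Rightarrow> 'w set) \<Rightarrow> ('q \<Rightarrow> 'q \<Rightarrow> 'w \<Rightarrow> 'w) \<Rightarrow> bool" where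
  "pmod_iso sc Q V f sc' W g \<longleftrightarrow>
     (\<exists>\<phi>. (\<forall>q\<in>Q. bij_betw (\<phi> q) (V q) (W q) \<and>
              (\<forall>u\<in>V q. \<forall>v\<in>V q. \<phi> q (u + v) = \<phi> q u + \<phi> q v) \<and>
              (\<forall>c. \<forall>v\<in>V q. \<phi> q (sc c v) = sc' c (\<phi> q v))) \<and>
          (\<forall>q\<in>Q. \<forall>r\<in>Q. q \<le> r \<longrightarrow> (\<forall>v\<in>V q. \<phi> r (f q r v) = g q r (\<phi> q v))))"

definition is_interval :: "'q::order set \<Rightarrow> 'q set \<Rightarrow> bool" where
  "is_interval Q I \<longleftrightarrow> I \<subseteq> Q \<and> I \<noteq> {} \<and>
     (\<forall>p\<in>I. \<forall>q\<in>Q. \<forall>r\<in>I. p \<le> q \<and> q \<le> r \<longrightarrow> q \<in> I) \<and>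
     (\<forall>p\<in>I. \<forall>q\<in>I. (\<lambda>a b. a \<in> I \<and> b \<in> I \<and> (a \<le> b \<or> b \<le> a))\<^sup>*\<^sup>* p q)"

definition kI_space :: "'q set \<Rightarrow> 'q \<Rightarrow> 'k::field set" where
  "kI_space I q = (if q \<in> I then UNIV else {0})"

definition kI_map :: "'q set \<Rightarrow> 'q \<Rightarrow> 'q \<Rightarrow> 'k::field \<Rightarrow> 'k" where
  "kI_map I q r c = (if q \<in> I \<and> r \<in> I then c else 0)"

definition cross_down :: "'s::linorder \<Rightarrow> 't::linorder \<Rightarrow> ('s \<times> 't) set" where
  "cross_down x y = ({x} \<times> {t. t \<le> y}) \<union> ({s. s \<le> x} \<times> {y})"

definition cross_up :: "'s::linorder \<Rightarrow> 't::linorder \<Rightarrow> ('s \<times> 't) set" where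
  "cross_up x y = ({x} \<times> {t. t \<ge> y}) \<union> ({s. s \<ge> x} \<times> {y})"

end

theory Submission
  imports Defs
begin

text \<open>
  The poset \<open>Q\<close> is a wedge: two chains glued at their common top or bottom point \<open>m\<close>.
  If \<open>V m = 0\<close>, an indecomposable module splits along the two arms and so lives on a chain.
  Otherwise (and on a chain) pick a point \<open>q\<close>, a vector \<open>v \<noteq> 0\<close> in \<open>V q\<close> and a hyperplane
  \<open>H\<close> of \<open>V q\<close> missing \<open>v\<close>, using least images from below and greatest kernels from above:
  chains of subspaces of a finite-dimensional space have extremal members. Zorn's lemma, with
  finite dimensionality entering through eventual images, extends \<open>v\<close> to a coherent family
  of preimages below \<open>q\<close> and \<open>H\<close> to a coherent family of hyperplanes missing the images of
  \<open>v\<close> above \<open>q\<close>. The lines through these vectors form a summand, complemented by the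
  preimages of \<open>H\<close> below \<open>q\<close> and the hyperplanes above \<open>q\<close>. Indecomposability kills the
  complement, so the module is pointwise spanned by a coherent family of vectors, and the
  support of such a family is an interval.
\<close>

context vector_space
begin

definition line_complement :: "'b set \<Rightarrow> 'b \<Rightarrow> 'b set \<Rightarrow> bool" where
  "line_complement W w H \<longleftrightarrow>
     subspace H \<and> H \<subseteq> W \<and> w \<notin> H \<and> (\<forall>z\<in>W. \<exists>h\<in>H. \<exists>c. z = h + c *s w)"

lemma line_complementD:
  assumes "line_complement W w H"
  shows "subspace H" "H \<subseteq> W" "w \<notin> H"
  using assms unfolding line_complement_def by blast+

lemma line_complement_decompose:
  assumes "line_complement W w H" "z \<in> W"
  obtains h c where "h \<in> H" "z = h + c *s w"
  using assms unfolding line_complement_def by blast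

lemma independent_finite_card_le_dim:
  assumes "independent A" "A \<subseteq> T" "T \<subseteq> span B" "finite B"
  shows "finite A \<and> card A \<le> dim T"
proof -
  obtain C where C: "A \<subseteq> C" "C \<subseteq> T" "independent C" "T \<subseteq> span C"
    using maximal_independent_subset_extend[OF assms(2,1)] by blast
  have "finite C" using independent_span_bound[OF assms(4) C(3)] C(2) assms(3) by blast
  moreover have "card C = dim T" using basis_card_eq_dim C by blast
  ultimately show ?thesis using C(1) card_mono finite_subset by metis
qed

lemma subspace_eq_if_dim_le:
  assumes "subspace S" "S \<subseteq> T" "T \<subseteq> span B" "finite B" "dim T \<le> dim S"
  shows "S = T"
proof (rule ccontr)
  assume "S \<noteq> T"
  then obtain t where t: "t \<in> T" "t \<notin> S" using assms(2) by blast
  obtain A where A: "A \<subseteq> S" "independent A" "S \<subseteq> span A" "card A = dim S"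
    using basis_exists by blast
  have "t \<notin> span A" using span_subspace A assms(1) t by blast
  then have "independent (insert t A)" "t \<notin> A" using independent_insertI A(2) span_base by blast+
  moreover have "insert t A \<subseteq> T" using A(1) assms(2) t(1) by blast
  ultimately have "card A + 1 \<le> dim T"
    using independent_finite_card_le_dim[OF _ _ assms(3,4), of "insert t A"] by auto
  then show False using A(4) assms(5) by simp
qed

lemma chain_of_subspaces_has_least:
  assumes "finite B" "P p1" "\<And>p. P p \<Longrightarrow> subspace (g p) \<and> g p \<subseteq> span B"
    and "\<And>p p'. P p \<Longrightarrow> P p' \<Longrightarrow> g p \<subseteq> g p' \<or> g p' \<subseteq> g p"
  shows "\<exists>p0. P p0 \<and> (\<forall>p. P p \<longrightarrow> g p0 \<subseteq> g p)"
proof -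
  obtain p0 where p0: "P p0" "\<And>p. P p \<Longrightarrow> dim (g p0) \<le> dim (g p)"
    using ex_has_least_nat[of P p1 "dim \<circ> g"] assms(2) by auto
  have "g p0 \<subseteq> g p" if "P p" for p
    using assms(4)[OF p0(1) that] subspace_eq_if_dim_le[of "g p" "g p0" B] assms(1,3) p0 that
    by blast
  then show ?thesis using p0(1) by blast
qed

lemma chain_of_subspaces_has_greatest:
  assumes "finite B" "P p1" "\<And>p. P p \<Longrightarrow> subspace (g p) \<and> g p \<subseteq> span B"
    and "\<And>p p'. P p \<Longrightarrow> P p' \<Longrightarrow> g p \<subseteq> g p' \<or> g p' \<subseteq> g p"
  shows "\<exists>p0. P p0 \<and> (\<forall>p. P p \<longrightarrow> g p \<subseteq> g p0)"
proof -
  have "dim (g p) < card B + 1" if "P p" for p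
    using dim_le_card[of "g p" B] assms(1,3) that by fastforce
  then obtain p0 where p0: "P p0" "\<And>p. P p \<Longrightarrow> dim (g p) \<le> dim (g p0)"
    using ex_has_greatest_nat[of P p1 "dim \<circ> g" "card B + 1"] assms(2) by auto
  have "g p \<subseteq> g p0" if "P p" for p
    using assms(4)[OF p0(1) that] subspace_eq_if_dim_le[of "g p0" "g p" B] assms(1,3) p0 that
    by blast
  then show ?thesis using p0(1) by blast
qed

lemma line_complement_exists:
  assumes "subspace G" "G \<subseteq> W" "subspace W" "w \<in> W" "w \<notin> G"
  shows "\<exists>H. G \<subseteq> H \<and> line_complement W w H"
proof -
  obtain A where A: "A \<subseteq> G" "independent A" "G \<subseteq> span A"
    using maximal_independent_subset by blast
  have spA: "span A = G" using span_subspace A assms(1) by blast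
  then have wA: "w \<notin> span A" using assms(5) by simp
  have "insert w A \<subseteq> W" using A(1) assms(2,4) by blast
  then obtain B where B: "insert w A \<subseteq> B" "B \<subseteq> W" "independent B" "W \<subseteq> span B"
    using maximal_independent_subset_extend independent_insertI[OF wA A(2)] by metis
  define H where "H = span (B - {w})"
  have "A \<subseteq> B - {w}" using B(1) wA span_base by blast
  then have "G \<subseteq> H" unfolding H_def using spA span_mono by blast
  moreover have "H \<subseteq> W" unfolding H_def using span_minimal[of "B - {w}" W] B(2) assms(3) by blast
  moreover have "w \<notin> H" unfolding H_def using B(1,3) dependent_def by blast
  moreover have "\<exists>h\<in>H. \<exists>c. z = h + c *s w" if "z \<in> W" for z
  proof -
    have "insert w (B - {w}) = B" using B(1) by blast
    then have "z \<in> span (insert w (B - {w}))" using B(4) that by auto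
    then obtain k where "z - k *s w \<in> H" unfolding H_def span_insert by blast
    then show ?thesis by (intro bexI[of _ "z - k *s w"] exI[of _ k]) auto
  qed
  moreover have "subspace H" unfolding H_def by (rule subspace_span)
  ultimately show ?thesis unfolding line_complement_def by blast
qed

lemma line_complement_swap:
  assumes "line_complement W w H" "v \<in> W" "v \<notin> H"
  shows "line_complement W v H"
proof -
  have H: "subspace H" "H \<subseteq> W" "\<forall>z\<in>W. \<exists>h\<in>H. \<exists>c. z = h + c *s w"
    using assms(1) unfolding line_complement_def by blast+
  obtain h c where hc: "h \<in> H" "v = h + c *s w" using H(3) assms(2) by blast
  have "c \<noteq> 0"
  proof
    assume "c = 0"
    then show False using hc assms(3) by simp
  qed
  moreover have "c *s w = v - h" using hc(2) by simp
  ultimately have w: "w = inverse c *s (v - h)" by (metis scale_scale left_inverse scale_one)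
  have "\<exists>h\<in>H. \<exists>c. z = h + c *s v" if z: "z \<in> W" for z
  proof -
    obtain h' d where hd: "h' \<in> H" "z = h' + d *s w" using H(3) z by blast
    have "z = h' + (d * inverse c) *s (v - h)" using hd(2) w by simp
    also have "\<dots> = (h' - (d * inverse c) *s h) + (d * inverse c) *s v"
      by (simp add: scale_right_diff_distrib)
    finally have "z = (h' - (d * inverse c) *s h) + (d * inverse c) *s v" .
    moreover have "h' - (d * inverse c) *s h \<in> H"
      using subspace_diff[OF H(1) hd(1) subspace_scale[OF H(1) hc(1)]] .
    ultimately show ?thesis by blast
  qed
  then show ?thesis unfolding line_complement_def using H(1,2) assms(3) by blast
qed

lemma subspace_Union_chain:
  assumes "\<SS> \<noteq> {}" "\<And>S. S \<in> \<SS> \<Longrightarrow> subspace S" "Complete_Partial_Order.chain (\<subseteq>) \<SS>"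
  shows "subspace (\<Union>\<SS>)"
proof (rule subspaceI)
  show "0 \<in> \<Union>\<SS>" using assms(1,2) subspace_0 by blast
next
  fix a b assume "a \<in> \<Union>\<SS>" "b \<in> \<Union>\<SS>"
  then obtain S T where "S \<in> \<SS>" "T \<in> \<SS>" "a \<in> S" "b \<in> T" by blast
  then show "a + b \<in> \<Union>\<SS>"
    using assms(2,3) subspace_add unfolding chain_def by (metis UnionI subsetD)
next
  fix c a assume "a \<in> \<Union>\<SS>"
  then show "c *s a \<in> \<Union>\<SS>" using assms(2) subspace_scale by blast
qed

lemma scale_mem_subspace_iff:
  assumes "subspace S" "c \<noteq> 0"
  shows "c *s a \<in> S \<longleftrightarrow> a \<in> S"
proof
  assume "c *s a \<in> S"
  then have "inverse c *s (c *s a) \<in> S" using subspace_scale[OF assms(1)] by blast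
  then show "a \<in> S" using assms(2) by simp
qed (rule subspace_scale[OF assms(1)])

end

(* Partial sections over L through (q, y0), closed in the direction R; Zorn's lemma is
   applied to this family. *)
definition compatible_families ::
  "'a::order set \<Rightarrow> 'a \<Rightarrow> 'b \<Rightarrow> ('a \<Rightarrow> 'b \<Rightarrow> bool) \<Rightarrow> ('a \<Rightarrow> 'b \<Rightarrow> 'a \<Rightarrow> 'b \<Rightarrow> bool)
    \<Rightarrow> ('a \<Rightarrow> 'a \<Rightarrow> bool) \<Rightarrow> ('a \<times> 'b) set set" where
  "compatible_families L q y0 admissible agree R = {G. G \<subseteq> L \<times> UNIV \<and> (q, y0) \<in> G \<and>
     (\<forall>p y. (p, y) \<in> G \<longrightarrow> admissible p y) \<and>
     (\<forall>p y p' y'. (p, y) \<in> G \<longrightarrow> (p', y') \<in> G \<longrightarrow> p \<le> p' \<longrightarrow> agree p y p' y') \<and>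
     (\<forall>p y p'. (p, y) \<in> G \<longrightarrow> p' \<in> L \<longrightarrow> R p p' \<longrightarrow> p' \<in> Domain G)}"

lemma compatible_familiesD:
  assumes "G \<in> compatible_families L q y0 admissible agree R"
  shows "\<And>p y. (p, y) \<in> G \<Longrightarrow> p \<in> L" and "(q, y0) \<in> G"
    and "\<And>p y. (p, y) \<in> G \<Longrightarrow> admissible p y"
    and "\<And>p y p' y'. (p, y) \<in> G \<Longrightarrow> (p', y') \<in> G \<Longrightarrow> p \<le> p' \<Longrightarrow> agree p y p' y'"
    and "\<And>p y p'. (p, y) \<in> G \<Longrightarrow> p' \<in> L \<Longrightarrow> R p p' \<Longrightarrow> p' \<in> Domain G"
  using assms unfolding compatible_families_def by blast+

lemma compatible_familiesI:
  assumes "\<And>p y. (p, y) \<in> G \<Longrightarrow> p \<in> L" and "(q, y0) \<in> G"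
    and "\<And>p y. (p, y) \<in> G \<Longrightarrow> admissible p y"
    and "\<And>p y p' y'. (p, y) \<in> G \<Longrightarrow> (p', y') \<in> G \<Longrightarrow> p \<le> p' \<Longrightarrow> agree p y p' y'"
    and "\<And>p y p'. (p, y) \<in> G \<Longrightarrow> p' \<in> L \<Longrightarrow> R p p' \<Longrightarrow> p' \<in> Domain G"
  shows "G \<in> compatible_families L q y0 admissible agree R"
proof -
  have "G \<subseteq> L \<times> UNIV" using assms(1) by auto
  then show ?thesis using assms(2-5) unfolding compatible_families_def by blast
qed

lemma compatible_section_exists:
  assumes q: "q \<in> L" "admissible q y0" "agree q y0 q y0" "\<And>p. p \<in> L \<Longrightarrow> R q p \<Longrightarrow> p = q"
    and extend: "\<And>G p. G \<in> compatible_families L q y0 admissible agree R \<Longrightarrow> p \<in> L \<Longrightarrow> p \<notin> Domain G \<Longrightarrow>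
      \<exists>G'\<in>compatible_families L q y0 admissible agree R. G \<subseteq> G' \<and> p \<in> Domain G'"
  shows "\<exists>s. s q = y0 \<and> (\<forall>p\<in>L. admissible p (s p)) \<and>
    (\<forall>p\<in>L. \<forall>p'\<in>L. p \<le> p' \<longrightarrow> agree p (s p) p' (s p'))"
proof -
  let ?F = "compatible_families L q y0 admissible agree R"
  have "{(q, y0)} \<in> ?F" using q unfolding compatible_families_def by auto
  moreover have "\<Union>\<C> \<in> ?F" if "\<C> \<noteq> {}" "subset.chain ?F \<C>" for \<C>
  proof -
    have F: "\<And>G. G \<in> \<C> \<Longrightarrow> G \<in> ?F" and ch: "\<And>G G'. G \<in> \<C> \<Longrightarrow> G' \<in> \<C> \<Longrightarrow> G \<subseteq> G' \<or> G' \<subseteq> G"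
      using that(2) unfolding subset.chain_def by blast+
    have "agree p y p' y'" if py: "(p, y) \<in> \<Union>\<C>" "(p', y') \<in> \<Union>\<C>" "p \<le> p'" for p y p' y'
    proof -
      obtain G G' where "G \<in> \<C>" "G' \<in> \<C>" "(p, y) \<in> G" "(p', y') \<in> G'" using py(1,2) by blast
      then have "G \<union> G' \<in> ?F" "(p, y) \<in> G \<union> G'" "(p', y') \<in> G \<union> G'"
        using ch F by (metis Un_absorb1 Un_absorb2 UnI1 UnI2)+
      then show ?thesis using py(3) unfolding compatible_families_def by blast
    qed
    moreover have "p' \<in> Domain (\<Union>\<C>)" if py: "(p, y) \<in> \<Union>\<C>" "p' \<in> L" "R p p'" for p y p'
    proof -
      obtain G where "G \<in> \<C>" "(p, y) \<in> G" using py(1) by blast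
      then show ?thesis using F py(2,3) unfolding compatible_families_def by blast
    qed
    moreover have "\<Union>\<C> \<subseteq> L \<times> UNIV" "(q, y0) \<in> \<Union>\<C>" "\<forall>p y. (p, y) \<in> \<Union>\<C> \<longrightarrow> admissible p y"
      using F that(1) unfolding compatible_families_def by blast+
    ultimately show ?thesis unfolding compatible_families_def by blast
  qed
  ultimately obtain M where M: "M \<in> ?F" and max: "\<And>G. G \<in> ?F \<Longrightarrow> M \<subseteq> G \<Longrightarrow> G = M"
    using subset_Zorn_nonempty[of ?F] by blast
  have total: "p \<in> Domain M" if "p \<in> L" for p
    using extend[OF M that] max by blast
  define s where "s p = (if p = q then y0 else SOME y. (p, y) \<in> M)" for p
  have "(p, s p) \<in> M" if "p \<in> L" for p
    using total[OF that] M unfolding s_def compatible_families_def by (auto intro: someI)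
  moreover have "admissible p y" "\<And>p' y'. (p', y') \<in> M \<Longrightarrow> p \<le> p' \<Longrightarrow> agree p y p' y'"
    if "(p, y) \<in> M" for p y
    using M that unfolding compatible_families_def by blast+
  moreover have "s q = y0" unfolding s_def by simp
  ultimately show ?thesis by blast
qed

definition branches_only_at :: "'a::order set \<Rightarrow> 'a \<Rightarrow> bool" where
  "branches_only_at L q \<longleftrightarrow>
     (\<forall>p\<in>L. p \<noteq> q \<longrightarrow>
        Complete_Partial_Order.chain (\<le>) {a\<in>L. a \<le> p} \<and>
        Complete_Partial_Order.chain (\<le>) {a\<in>L. p \<le> a})"

lemma branches_only_at_subset:
  "branches_only_at L' q \<Longrightarrow> L \<subseteq> L' \<Longrightarrow> branches_only_at L q"
  unfolding branches_only_at_def by (blast intro: chain_subset)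

lemma chain_branches_only_at: "Complete_Partial_Order.chain (\<le>) L \<Longrightarrow> branches_only_at L q"
  unfolding branches_only_at_def by (blast intro: chain_subset)

definition wedge :: "'a::order set \<Rightarrow> 'a set \<Rightarrow> 'a \<Rightarrow> bool" where
  "wedge A B m \<longleftrightarrow> m \<in> A \<and> m \<in> B \<and>
     Complete_Partial_Order.chain (\<le>) A \<and> Complete_Partial_Order.chain (\<le>) B \<and>
     (\<forall>a\<in>A. \<forall>b\<in>B. a \<le> b \<or> b \<le> a \<longrightarrow> a = m \<or> b = m)"

lemma wedge_sym: "wedge A B m \<Longrightarrow> wedge B A m"
  unfolding wedge_def by blast

lemma wedge_branches_only_at:
  assumes "wedge A B m"
  shows "branches_only_at (A \<union> B) m"
  unfolding branches_only_at_def
proof (intro ballI impI)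
  have arm: "Complete_Partial_Order.chain (\<le>) {a\<in>A \<union> B. a \<le> p} \<and>
      Complete_Partial_Order.chain (\<le>) {a\<in>A \<union> B. p \<le> a}"
    if "wedge A B m" "p \<in> A" "p \<noteq> m" for A B p
  proof -
    have "{a\<in>A \<union> B. a \<le> p} \<subseteq> A" "{a\<in>A \<union> B. p \<le> a} \<subseteq> A"
      using that unfolding wedge_def by blast+
    then show ?thesis using that(1) chain_subset unfolding wedge_def by metis
  qed
  fix p assume "p \<in> A \<union> B" "p \<noteq> m"
  then show "Complete_Partial_Order.chain (\<le>) {a\<in>A \<union> B. a \<le> p} \<and>
      Complete_Partial_Order.chain (\<le>) {a\<in>A \<union> B. p \<le> a}"
    using arm[OF assms] arm[OF wedge_sym[OF assms]] by (auto simp: Un_commute)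
qed

lemma wedge_cross_down:
  fixes x :: "'s::linorder" and y :: "'t::linorder"
  shows "wedge ({x} \<times> {t. t \<le> y}) ({s. s \<le> x} \<times> {y}) (x, y)"
  unfolding wedge_def chain_def less_eq_prod_def by (auto simp: antisym linear)

lemma wedge_cross_up:
  fixes x :: "'s::linorder" and y :: "'t::linorder"
  shows "wedge ({x} \<times> {t. y \<le> t}) ({s. x \<le> s} \<times> {y}) (x, y)"
  unfolding wedge_def chain_def less_eq_prod_def by (auto simp: antisym linear)

locale pfd_module = vector_space scale
  for scale :: "'k::field \<Rightarrow> 'v::ab_group_add \<Rightarrow> 'v" (infixr "*s" 75) +
  fixes Q :: "'q::order set" and V :: "'q \<Rightarrow> 'v set" and f :: "'q \<Rightarrow> 'q \<Rightarrow> 'v \<Rightarrow> 'v"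
  assumes pmod: "pmod scale Q V f" and pfd: "pfd scale Q V"
begin

abbreviation is_interval_module :: bool where
  "is_interval_module \<equiv> \<exists>I. is_interval Q I \<and>
     pmod_iso scale Q V f ((*) :: 'k \<Rightarrow> 'k \<Rightarrow> 'k) (kI_space I) (kI_map I)"

lemma
  shows subspace_V: "p \<in> Q \<Longrightarrow> subspace (V p)"
    and map_in_V: "p \<in> Q \<Longrightarrow> r \<in> Q \<Longrightarrow> p \<le> r \<Longrightarrow> a \<in> V p \<Longrightarrow> f p r a \<in> V r"
    and map_add: "p \<in> Q \<Longrightarrow> r \<in> Q \<Longrightarrow> p \<le> r \<Longrightarrow> a \<in> V p \<Longrightarrow> b \<in> V p \<Longrightarrow>
      f p r (a + b) = f p r a + f p r b"
    and map_scale: "p \<in> Q \<Longrightarrow> r \<in> Q \<Longrightarrow> p \<le> r \<Longrightarrow> a \<in> V p \<Longrightarrow> f p r (c *s a) = c *s f p r a"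
    and map_id: "p \<in> Q \<Longrightarrow> a \<in> V p \<Longrightarrow> f p p a = a"
    and map_comp: "p \<in> Q \<Longrightarrow> r \<in> Q \<Longrightarrow> s \<in> Q \<Longrightarrow> p \<le> r \<Longrightarrow> r \<le> s \<Longrightarrow> a \<in> V p \<Longrightarrow>
      f r s (f p r a) = f p s a"
proof -
  note parts = pmod[unfolded pmod_def]
  note sub = conjunct1[OF parts] and lin = conjunct1[OF conjunct2[OF parts]]
    and ident = conjunct1[OF conjunct2[OF conjunct2[OF parts]]]
    and comp = conjunct2[OF conjunct2[OF conjunct2[OF parts]]]
  show "p \<in> Q \<Longrightarrow> subspace (V p)" using sub by blast
  show "p \<in> Q \<Longrightarrow> r \<in> Q \<Longrightarrow> p \<le> r \<Longrightarrow> a \<in> V p \<Longrightarrow> f p r a \<in> V r" using lin by blast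
  show "p \<in> Q \<Longrightarrow> r \<in> Q \<Longrightarrow> p \<le> r \<Longrightarrow> a \<in> V p \<Longrightarrow> b \<in> V p \<Longrightarrow>
      f p r (a + b) = f p r a + f p r b" using lin by blast
  show "p \<in> Q \<Longrightarrow> r \<in> Q \<Longrightarrow> p \<le> r \<Longrightarrow> a \<in> V p \<Longrightarrow> f p r (c *s a) = c *s f p r a"
    using lin by blast
  show "p \<in> Q \<Longrightarrow> a \<in> V p \<Longrightarrow> f p p a = a" using ident by blast
  show "p \<in> Q \<Longrightarrow> r \<in> Q \<Longrightarrow> s \<in> Q \<Longrightarrow> p \<le> r \<Longrightarrow> r \<le> s \<Longrightarrow> a \<in> V p \<Longrightarrow>
      f r s (f p r a) = f p s a" using comp by blast
qed

lemma zero_in_V: "p \<in> Q \<Longrightarrow> 0 \<in> V p"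
  using subspace_V subspace_0 by blast

lemma map_zero: "p \<in> Q \<Longrightarrow> r \<in> Q \<Longrightarrow> p \<le> r \<Longrightarrow> f p r 0 = 0"
  using map_scale[of p r 0 0] zero_in_V by simp

lemma map_diff:
  assumes "p \<in> Q" "r \<in> Q" "p \<le> r" "a \<in> V p" "b \<in> V p"
  shows "f p r (a - b) = f p r a - f p r b"
proof -
  have "a - b \<in> V p" using subspace_diff[OF subspace_V] assms by blast
  then have "f p r (a - b) + f p r b = f p r a"
    using map_add[OF assms(1-3) _ assms(5), of "a - b"] by simp
  then show ?thesis by (simp add: eq_diff_eq)
qed

lemma V_finite_span: "p \<in> Q \<Longrightarrow> \<exists>B. finite B \<and> V p = span B"
  using pfd unfolding pfd_def by metis

lemma subspace_map_preimage:
  assumes "p \<in> Q" "r \<in> Q" "p \<le> r" "subspace S"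
  shows "subspace {z\<in>V p. f p r z \<in> S}"
proof (rule subspaceI)
  show "0 \<in> {z \<in> V p. f p r z \<in> S}"
    using zero_in_V[OF assms(1)] map_zero[OF assms(1-3)] subspace_0[OF assms(4)] by simp
next
  fix a b assume "a \<in> {z \<in> V p. f p r z \<in> S}" "b \<in> {z \<in> V p. f p r z \<in> S}"
  then show "a + b \<in> {z \<in> V p. f p r z \<in> S}"
    using map_add[OF assms(1-3)] subspace_add[OF subspace_V[OF assms(1)]] subspace_add[OF assms(4)]
    by simp
next
  fix c a assume "a \<in> {z \<in> V p. f p r z \<in> S}"
  then show "c *s a \<in> {z \<in> V p. f p r z \<in> S}"
    using map_scale[OF assms(1-3)] subspace_scale[OF subspace_V[OF assms(1)]]
      subspace_scale[OF assms(4)]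
    by simp
qed

lemma subspace_map_image:
  assumes "p \<in> Q" "r \<in> Q" "p \<le> r" "subspace S" "S \<subseteq> V p"
  shows "subspace (f p r ` S)"
proof (rule subspaceI)
  show "0 \<in> f p r ` S" using map_zero[OF assms(1-3)] subspace_0[OF assms(4)] by (metis image_eqI)
next
  fix a b assume "a \<in> f p r ` S" "b \<in> f p r ` S"
  then obtain a' b' where ab: "a' \<in> S" "b' \<in> S" "a = f p r a'" "b = f p r b'" by blast
  moreover have "a' \<in> V p" "b' \<in> V p" using ab(1,2) assms(5) by auto
  ultimately have "a + b = f p r (a' + b')" using map_add[OF assms(1-3)] by simp
  then show "a + b \<in> f p r ` S" using subspace_add[OF assms(4) ab(1,2)] by blast
next
  fix c a assume "a \<in> f p r ` S"
  then obtain a' where a': "a' \<in> S" "a = f p r a'" by blast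
  moreover have "a' \<in> V p" using a'(1) assms(5) by auto
  ultimately have "c *s a = f p r (c *s a')" using map_scale[OF assms(1-3)] by simp
  then show "c *s a \<in> f p r ` S" using subspace_scale[OF assms(4) a'(1)] by blast
qed

lemma map_image_V_mono:
  assumes "p \<in> Q" "p' \<in> Q" "r \<in> Q" "p \<le> p'" "p' \<le> r"
  shows "f p r ` V p \<subseteq> f p' r ` V p'"
proof
  fix z assume "z \<in> f p r ` V p"
  then obtain w where w: "w \<in> V p" "z = f p r w" by blast
  then have "z = f p' r (f p p' w)" using map_comp[OF assms w(1)] by simp
  then show "z \<in> f p' r ` V p'" using map_in_V[OF assms(1,2,4) w(1)] by blast
qed

lemma map_kernel_mono:
  assumes "r \<in> Q" "p \<in> Q" "p' \<in> Q" "r \<le> p" "p \<le> p'"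
  shows "{z\<in>V r. f r p z = 0} \<subseteq> {z\<in>V r. f r p' z = 0}"
proof
  fix z assume z: "z \<in> {z\<in>V r. f r p z = 0}"
  then have "f r p' z = f p p' 0" using map_comp[OF assms, of z] by simp
  then show "z \<in> {z\<in>V r. f r p' z = 0}" using z map_zero[OF assms(2,3,5)] by simp
qed

lemma chain_of_subspaces_of_V_has_least:
  assumes "r \<in> Q" "P p1" "\<And>p. P p \<Longrightarrow> subspace (g p) \<and> g p \<subseteq> V r"
    and "\<And>p p'. P p \<Longrightarrow> P p' \<Longrightarrow> g p \<subseteq> g p' \<or> g p' \<subseteq> g p"
  shows "\<exists>p0. P p0 \<and> (\<forall>p. P p \<longrightarrow> g p0 \<subseteq> g p)"
proof -
  obtain B where "finite B" "V r = span B" using V_finite_span[OF assms(1)] by blast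
  then show ?thesis using chain_of_subspaces_has_least[of B P p1 g] assms(2-4) by auto
qed

lemma chain_of_subspaces_of_V_has_greatest:
  assumes "r \<in> Q" "P p1" "\<And>p. P p \<Longrightarrow> subspace (g p) \<and> g p \<subseteq> V r"
    and "\<And>p p'. P p \<Longrightarrow> P p' \<Longrightarrow> g p \<subseteq> g p' \<or> g p' \<subseteq> g p"
  shows "\<exists>p0. P p0 \<and> (\<forall>p. P p \<longrightarrow> g p \<subseteq> g p0)"
proof -
  obtain B where "finite B" "V r = span B" using V_finite_span[OF assms(1)] by blast
  then show ?thesis using chain_of_subspaces_has_greatest[of B P p1 g] assms(2-4) by auto
qed

lemma indecomposableD:
  assumes "indecomposable scale Q V f" "submod scale Q V f A" "submod scale Q V f B"
    and "\<And>p z. p \<in> Q \<Longrightarrow> z \<in> V p \<Longrightarrow> \<exists>a\<in>A p. \<exists>b\<in>B p. z = a + b"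
    and "\<And>p. p \<in> Q \<Longrightarrow> A p \<inter> B p = {0}"
  shows "(\<forall>p\<in>Q. A p = {0}) \<or> (\<forall>p\<in>Q. B p = {0})"
proof -
  have "(\<forall>p\<in>Q. \<forall>z\<in>V p. \<exists>a\<in>A p. \<exists>b\<in>B p. z = a + b) \<and> (\<forall>p\<in>Q. A p \<inter> B p = {0})"
    using assms(4,5) by blast
  then show ?thesis
    using assms(1-3)
    unfolding indecomposable_def by (elim conjE allE[of _ A] allE[of _ B] impE) auto
qed

lemma interval_module_if_spanned_by_coherent_family:
  assumes q: "q \<in> Q" "n q \<noteq> 0"
    and spans: "\<And>p. p \<in> Q \<Longrightarrow> V p = range (\<lambda>c. c *s n p)"
    and coherent: "\<And>p p'. p \<in> Q \<Longrightarrow> p' \<in> Q \<Longrightarrow> p \<le> p' \<Longrightarrow> n p \<noteq> 0 \<Longrightarrow> f p p' (n p) = n p'"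
    and comparable: "\<And>p. p \<in> Q \<Longrightarrow> n p \<noteq> 0 \<Longrightarrow> p \<le> q \<or> q \<le> p"
  shows is_interval_module
proof -
  define I where "I = {p\<in>Q. n p \<noteq> 0}"
  have n_in_V: "n p \<in> V p" if "p \<in> Q" for p
    using spans[OF that] by (metis rangeI scale_one)
  have "is_interval Q I"
    unfolding is_interval_def
  proof (intro conjI ballI impI)
    show "I \<subseteq> Q" "I \<noteq> {}" using q unfolding I_def by auto
  next
    fix p r s assume "p \<in> I" "r \<in> Q" "s \<in> I" and prs: "p \<le> r \<and> r \<le> s"
    then have p: "p \<in> Q" "n p \<noteq> 0" and s: "s \<in> Q" "n s \<noteq> 0" unfolding I_def by auto
    have "n s = f r s (f p r (n p))"
      using coherent[OF p(1) s(1) _ p(2)] map_comp[OF p(1) \<open>r \<in> Q\<close> s(1)] prs n_in_V[OF p(1)]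
      by (metis order_trans)
    then show "r \<in> I"
      using coherent[OF p(1) \<open>r \<in> Q\<close> _ p(2)] map_zero[OF \<open>r \<in> Q\<close> s(1)] prs s(2) \<open>r \<in> Q\<close>
      unfolding I_def by auto
  next
    fix p p' assume "p \<in> I" "p' \<in> I"
    define R where "R = (\<lambda>a b. a \<in> I \<and> b \<in> I \<and> (a \<le> b \<or> b \<le> a))"
    have "q \<in> I" using q unfolding I_def by blast
    then have "R p q" "R q p'"
      using \<open>p \<in> I\<close> \<open>p' \<in> I\<close> comparable unfolding R_def I_def by auto
    then show "R\<^sup>*\<^sup>* p p'" by (meson r_into_rtranclp rtranclp_trans)
  qed
  moreover define \<phi> where "\<phi> p z = (if n p = 0 then 0 else THE c. z = c *s n p)" for p z
  have \<phi>_scale: "\<phi> p (c *s n p) = (if n p = 0 then 0 else c)" for p c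
    unfolding \<phi>_def by (auto simp: scale_cancel_right)
  have "pmod_iso scale Q V f ((*) :: 'k \<Rightarrow> 'k \<Rightarrow> 'k) (kI_space I) (kI_map I)"
    unfolding pmod_iso_def
  proof (rule exI[of _ \<phi>], intro conjI ballI allI impI)
    fix p assume p: "p \<in> Q"
    show "bij_betw (\<phi> p) (V p) (kI_space I p)"
    proof (cases "n p = 0")
      case True
      then show ?thesis
        using spans[OF p] \<phi>_scale[of p 0] unfolding kI_space_def I_def bij_betw_def by auto
    next
      case False
      have "inj_on (\<phi> p) (V p)"
        using spans[OF p] \<phi>_scale False by (auto intro!: inj_onI)
      moreover have "\<phi> p ` V p = UNIV"
        using spans[OF p] \<phi>_scale False by (auto simp: image_iff)
      ultimately show ?thesis using p False unfolding kI_space_def I_def bij_betw_def by simp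
    qed
    fix u w assume "u \<in> V p" "w \<in> V p"
    then obtain a b where "u = a *s n p" "w = b *s n p" using spans[OF p] by blast
    then show "\<phi> p (u + w) = \<phi> p u + \<phi> p w"
      using \<phi>_scale[of p "a + b"] \<phi>_scale[of p a] \<phi>_scale[of p b] by (simp add: scale_left_distrib)
  next
    fix p c w assume p: "p \<in> Q" and "w \<in> V p"
    then obtain a where "w = a *s n p" using spans[OF p] by blast
    then show "\<phi> p (c *s w) = c * \<phi> p w" using \<phi>_scale[of p "c * a"] \<phi>_scale[of p a] by simp
  next
    fix p r z assume pr: "p \<in> Q" "r \<in> Q" "p \<le> r" and "z \<in> V p"
    then obtain a where a: "z = a *s n p" using spans by blast
    show "\<phi> r (f p r z) = kI_map I p r (\<phi> p z)"
    proof (cases "n p = 0")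
      case True
      then show ?thesis using a map_zero[OF pr] \<phi>_scale[of r 0] \<phi>_scale[of p a]
        unfolding kI_map_def by simp
    next
      case False
      then have "f p r z = a *s n r"
        using a map_scale[OF pr n_in_V[OF pr(1)]] coherent[OF pr] by simp
      then show ?thesis using \<phi>_scale[of r a] \<phi>_scale[of p a] a pr False
        unfolding kI_map_def I_def by auto
    qed
  qed
  ultimately show ?thesis by blast
qed

lemma indecomposable_spanned_by_thin_summand:
  assumes indec: "indecomposable scale Q V f" and q: "q \<in> Q" "n q \<noteq> 0"
    and n_in_V: "\<And>p. p \<in> Q \<Longrightarrow> n p \<in> V p"
    and coherent: "\<And>p p'. p \<in> Q \<Longrightarrow> p' \<in> Q \<Longrightarrow> p \<le> p' \<Longrightarrow> n p \<noteq> 0 \<Longrightarrow> f p p' (n p) = n p'"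
    and C: "submod scale Q V f C"
    and C_spans: "\<And>p z. p \<in> Q \<Longrightarrow> z \<in> V p \<Longrightarrow> \<exists>c. \<exists>b\<in>C p. z = c *s n p + b"
    and C_avoids: "\<And>p c. p \<in> Q \<Longrightarrow> c *s n p \<in> C p \<Longrightarrow> c = 0 \<or> n p = 0"
    and p: "p \<in> Q"
  shows "V p = range (\<lambda>c. c *s n p)"
proof -
  define N where "N p = range (\<lambda>c. c *s n p)" for p
  have "submod scale Q V f N"
    unfolding submod_def
  proof (intro conjI ballI impI)
    fix p assume p: "p \<in> Q"
    show "subspace (N p)" unfolding N_def using subspace_span[of "{n p}"] span_singleton by simp
    show "N p \<subseteq> V p" unfolding N_def using subspace_scale[OF subspace_V[OF p] n_in_V[OF p]] by blast
  next
    fix p r z assume pr: "p \<in> Q" "r \<in> Q" "p \<le> r" and "z \<in> N p"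
    then obtain c where z: "z = c *s n p" unfolding N_def by blast
    show "f p r z \<in> N r"
    proof (cases "n p = 0")
      case True
      then have "f p r z = 0 *s n r" using z map_zero[OF pr] by simp
      then show ?thesis unfolding N_def by blast
    next
      case False
      then have "f p r z = c *s n r"
        using z map_scale[OF pr n_in_V[OF pr(1)]] coherent[OF pr] by simp
      then show ?thesis unfolding N_def by blast
    qed
  qed
  moreover have "\<exists>a\<in>N p. \<exists>b\<in>C p. z = a + b" if "p \<in> Q" "z \<in> V p" for p z
    using C_spans[OF that] unfolding N_def by blast
  moreover have "N p \<inter> C p = {0}" if p: "p \<in> Q" for p
  proof -
    have "0 \<in> C p" using C p subspace_0 unfolding submod_def by blast
    moreover have "z = 0" if "z \<in> N p" "z \<in> C p" for z
      using that C_avoids[OF p] unfolding N_def by auto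
    ultimately show "N p \<inter> C p = {0}" unfolding N_def by (auto intro: range_eqI[of _ _ 0])
  qed
  ultimately have "(\<forall>p\<in>Q. N p = {0}) \<or> (\<forall>p\<in>Q. C p = {0})"
    using indecomposableD[OF indec _ C] by blast
  moreover have "n q \<in> N q" unfolding N_def by (metis rangeI scale_one)
  ultimately have C0: "\<forall>p\<in>Q. C p = {0}" using q by blast
  show ?thesis
  proof
    show "V p \<subseteq> range (\<lambda>c. c *s n p)" using C_spans[OF p] C0 p by fastforce
    show "range (\<lambda>c. c *s n p) \<subseteq> V p"
      using n_in_V[OF p] subspace_scale[OF subspace_V[OF p]] by blast
  qed
qed

lemma interval_module_if_thin_summand:
  assumes indec: "indecomposable scale Q V f" and q: "q \<in> Q" "n q \<noteq> 0"
    and n_in_V: "\<And>p. p \<in> Q \<Longrightarrow> n p \<in> V p"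
    and coherent: "\<And>p p'. p \<in> Q \<Longrightarrow> p' \<in> Q \<Longrightarrow> p \<le> p' \<Longrightarrow> n p \<noteq> 0 \<Longrightarrow> f p p' (n p) = n p'"
    and comparable: "\<And>p. p \<in> Q \<Longrightarrow> n p \<noteq> 0 \<Longrightarrow> p \<le> q \<or> q \<le> p"
    and C: "submod scale Q V f C"
    and C_spans: "\<And>p z. p \<in> Q \<Longrightarrow> z \<in> V p \<Longrightarrow> \<exists>c. \<exists>b\<in>C p. z = c *s n p + b"
    and C_avoids: "\<And>p c. p \<in> Q \<Longrightarrow> c *s n p \<in> C p \<Longrightarrow> c = 0 \<or> n p = 0"
  shows is_interval_module
  using interval_module_if_spanned_by_coherent_family[OF q _ coherent comparable]
    indecomposable_spanned_by_thin_summand[OF assms(1-5,7-9)] by blast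

definition eventual_image :: "'q set \<Rightarrow> 'q \<Rightarrow> 'v set" where
  "eventual_image L p = (\<Inter>p'\<in>{p'\<in>L. p' \<le> p}. f p' p ` V p')"

lemma eventual_image_subset_V:
  assumes "L \<subseteq> Q" "p \<in> L"
  shows "eventual_image L p \<subseteq> V p"
proof -
  have "eventual_image L p \<subseteq> f p p ` V p" using assms(2) unfolding eventual_image_def by blast
  also have "\<dots> = V p" using map_id assms by force
  finally show ?thesis .
qed

lemma eventual_image_attained:
  assumes L: "L \<subseteq> Q" "p \<in> L" and chain: "Complete_Partial_Order.chain (\<le>) {a\<in>L. a \<le> p}"
  shows "\<exists>p0\<in>L. p0 \<le> p \<and> eventual_image L p = f p0 p ` V p0"
proof -
  have pQ: "p \<in> Q" using L by blast
  have "\<exists>p0. (p0 \<in> L \<and> p0 \<le> p) \<and> (\<forall>p'. p' \<in> L \<and> p' \<le> p \<longrightarrow> f p0 p ` V p0 \<subseteq> f p' p ` V p')"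
  proof (rule chain_of_subspaces_of_V_has_least[OF pQ])
    show "p \<in> L \<and> p \<le> p" using L by simp
  next
    fix p' assume p': "p' \<in> L \<and> p' \<le> p"
    then have "p' \<in> Q" using L(1) by blast
    then show "subspace (f p' p ` V p') \<and> f p' p ` V p' \<subseteq> V p"
      using subspace_map_image[OF _ pQ _ subspace_V] map_in_V[OF _ pQ] p' by blast
  next
    fix p' p'' assume p': "p' \<in> L \<and> p' \<le> p" "p'' \<in> L \<and> p'' \<le> p"
    then have "p' \<le> p'' \<or> p'' \<le> p'" using chain unfolding chain_def by blast
    moreover have "p' \<in> Q" "p'' \<in> Q" using p' L(1) by blast+
    ultimately show "f p' p ` V p' \<subseteq> f p'' p ` V p'' \<or> f p'' p ` V p'' \<subseteq> f p' p ` V p'"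
      using map_image_V_mono[OF _ _ pQ] p' by blast
  qed
  then obtain p0 where p0: "p0 \<in> L" "p0 \<le> p"
    and least: "\<And>p'. p' \<in> L \<Longrightarrow> p' \<le> p \<Longrightarrow> f p0 p ` V p0 \<subseteq> f p' p ` V p'"
    by blast
  have "eventual_image L p = f p0 p ` V p0"
  proof
    show "eventual_image L p \<subseteq> f p0 p ` V p0" unfolding eventual_image_def using p0 by blast
    show "f p0 p ` V p0 \<subseteq> eventual_image L p" unfolding eventual_image_def using least by blast
  qed
  then show ?thesis using p0 by blast
qed

lemma map_eventual_image:
  assumes L: "L \<subseteq> Q" "p \<in> L" "r \<in> L" "p \<le> r"
    and chain: "Complete_Partial_Order.chain (\<le>) {a\<in>L. a \<le> r}" and y: "y \<in> eventual_image L p"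
  shows "f p r y \<in> eventual_image L r"
  unfolding eventual_image_def
proof
  fix p' assume "p' \<in> {p'\<in>L. p' \<le> r}"
  then have p': "p' \<in> L" "p' \<le> r" by blast+
  have Q: "p \<in> Q" "r \<in> Q" "p' \<in> Q" using L p' by blast+
  show "f p r y \<in> f p' r ` V p'"
  proof (cases "p' \<le> p")
    case True
    then obtain w where w: "w \<in> V p'" "y = f p' p w"
      using y p'(1) unfolding eventual_image_def by blast
    then have "f p r y = f p' r w" using map_comp[OF Q(3,1,2) True L(4)] by simp
    then show ?thesis using w(1) by blast
  next
    case False
    then have "p \<le> p'" using chain L(2,4) p' unfolding chain_def by blast
    moreover have "y \<in> V p" using y eventual_image_subset_V L(1,2) by blast
    ultimately have "f p r y = f p' r (f p p' y)" "f p p' y \<in> V p'"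
      using map_comp[OF Q(1,3,2) _ p'(2)] map_in_V[OF Q(1,3)] by auto
    then show ?thesis by blast
  qed
qed

context
  fixes L q v
  assumes L: "L \<subseteq> Q" "q \<in> L" "\<And>p. p \<in> L \<Longrightarrow> p \<le> q" and branch: "branches_only_at L q"
    and v: "v \<in> V q" "v \<noteq> 0" "\<And>p. p \<in> L \<Longrightarrow> v \<in> f p q ` V p"
begin

(* Values are kept in eventual images, so that points further down can still be added. *)
abbreviation partial_preimages :: "('q \<times> 'v) set set" where
  "partial_preimages \<equiv>
     compatible_families L q v (\<lambda>p y. y \<in> eventual_image L p) (\<lambda>p y p' y'. f p p' y = y') (\<le>)"

lemma compatible_preimage_exists:
  assumes G: "G \<in> partial_preimages" and p: "p \<in> L" "p \<notin> Domain G"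
  shows "\<exists>z\<in>eventual_image L p. \<forall>u y. (u, y) \<in> G \<longrightarrow> p \<le> u \<longrightarrow> f p u z = y"
proof -
  note G_L = compatible_familiesD(1)[OF G] and G_E = compatible_familiesD(3)[OF G]
    and G_agree = compatible_familiesD(4)[OF G]
  have "(q, v) \<in> G" using compatible_familiesD(2)[OF G] .
  have pQ: "p \<in> Q" and "p \<noteq> q" using p L \<open>(q, v) \<in> G\<close> by blast+
  then have below: "Complete_Partial_Order.chain (\<le>) {a\<in>L. a \<le> p}"
    and above: "Complete_Partial_Order.chain (\<le>) {a\<in>L. p \<le> a}"
    using branch p(1) unfolding branches_only_at_def by blast+
  obtain p0 where p0: "p0 \<in> L" "p0 \<le> p" "eventual_image L p = f p0 p ` V p0"
    using eventual_image_attained[OF L(1) p(1) below] by blast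
  have p0Q: "p0 \<in> Q" using p0 L by blast
  have y_V: "y \<in> V u" if "(u, y) \<in> G" for u y
    using G_E[OF that] eventual_image_subset_V[OF L(1) G_L[OF that]] by blast
(* The constraints from the points above p form a chain of subspaces; any z in the least
     one is compatible with all of them. *)
  define T where "T u y = {z \<in> eventual_image L p. f p u z \<in> range (\<lambda>c. c *s y)}" for u y
  have "\<exists>uy. ((uy \<in> G \<and> p \<le> fst uy) \<and> (\<forall>uy'. uy' \<in> G \<and> p \<le> fst uy' \<longrightarrow>
      T (fst uy) (snd uy) \<subseteq> T (fst uy') (snd uy')))"
  proof (rule chain_of_subspaces_of_V_has_least[OF pQ])
    show "(q, v) \<in> G \<and> p \<le> fst (q, v)" using \<open>(q, v) \<in> G\<close> L(3) p(1) by simp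
  next
    fix uy assume uy: "uy \<in> G \<and> p \<le> fst uy"
    then have uQ: "fst uy \<in> Q" using G_L L(1) by (metis subsetD surjective_pairing)
    have "subspace (range (\<lambda>c. c *s snd uy))"
      using subspace_span[of "{snd uy}"] span_singleton by simp
    then have "subspace (eventual_image L p \<inter> {z\<in>V p. f p (fst uy) z \<in> range (\<lambda>c. c *s snd uy)})"
      using subspace_inter subspace_map_preimage[OF pQ uQ]
        subspace_map_image[OF p0Q pQ p0(2) subspace_V]
        p0(3) p0Q uy by simp
    moreover have "T (fst uy) (snd uy) =
        eventual_image L p \<inter> {z\<in>V p. f p (fst uy) z \<in> range (\<lambda>c. c *s snd uy)}"
      unfolding T_def using eventual_image_subset_V[OF L(1) p(1)] by blast
    ultimately show "subspace (T (fst uy) (snd uy)) \<and> T (fst uy) (snd uy) \<subseteq> V p"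
      unfolding T_def using eventual_image_subset_V[OF L(1) p(1)] by auto
  next
    have T_mono: "T u y \<subseteq> T u' y'"
      if uy: "(u, y) \<in> G" "(u', y') \<in> G" "p \<le> u" "u \<le> u'" for u y u' y'
    proof
      fix z assume z: "z \<in> T u y"
      then obtain c where c: "f p u z = c *s y" unfolding T_def by blast
      have Q: "u \<in> Q" "u' \<in> Q" using uy G_L L(1) by blast+
      have "z \<in> V p" using z eventual_image_subset_V[OF L(1) p(1)] unfolding T_def by blast
      then have "f p u' z = c *s f u u' y"
        using map_comp[OF pQ Q uy(3,4)] c map_scale[OF Q uy(4) y_V[OF uy(1)]] by metis
      then show "z \<in> T u' y'" using z G_agree[OF uy(1,2,4)] unfolding T_def by auto
    qed
    fix uy uy' assume "uy \<in> G \<and> p \<le> fst uy" "uy' \<in> G \<and> p \<le> fst uy'"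
    then have "fst uy \<le> fst uy' \<or> fst uy' \<le> fst uy"
      using above G_L
      unfolding chain_def by (metis (no_types, lifting) mem_Collect_eq prod.collapse)
    then show "T (fst uy) (snd uy) \<subseteq> T (fst uy') (snd uy') \<or>
        T (fst uy') (snd uy') \<subseteq> T (fst uy) (snd uy)"
      using T_mono \<open>uy \<in> G \<and> p \<le> fst uy\<close> \<open>uy' \<in> G \<and> p \<le> fst uy'\<close> by (metis prod.collapse)
  qed
  then obtain u0 y0 where u0: "(u0, y0) \<in> G" "p \<le> u0"
    and least: "\<And>u y. (u, y) \<in> G \<Longrightarrow> p \<le> u \<Longrightarrow> T u0 y0 \<subseteq> T u y"
    by (metis fst_conv snd_conv prod.collapse)
  have u0Q: "u0 \<in> Q" using u0 G_L L(1) by blast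
  have "y0 \<noteq> 0"
  proof
    assume "y0 = 0"
    then have "v = f u0 q 0" using G_agree[OF u0(1) \<open>(q, v) \<in> G\<close> L(3)[OF G_L[OF u0(1)]]] by simp
    then show False using map_zero[OF u0Q _ L(3)[OF G_L[OF u0(1)]]] L(1,2) v(2) by blast
  qed
  obtain w where w: "w \<in> V p0" "y0 = f p0 u0 w"
    using G_E[OF u0(1)] p0 u0(2) unfolding eventual_image_def by (blast dest: order_trans)
  define z where "z = f p0 p w"
  have z: "z \<in> eventual_image L p" "z \<in> V p" "f p u0 z = y0"
    using p0(3) w map_in_V[OF p0Q pQ p0(2)] map_comp[OF p0Q pQ u0Q p0(2) u0(2)]
    unfolding z_def by auto
  have "f p u z = y" if uy: "(u, y) \<in> G" "p \<le> u" for u y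
  proof -
    have uQ: "u \<in> Q" using uy G_L L(1) by blast
    have "z \<in> T u0 y0" unfolding T_def using z by (auto intro: range_eqI[of _ _ 1])
    then obtain c where c: "f p u z = c *s y" using least[OF uy] unfolding T_def by blast
    have "u \<le> u0 \<or> u0 \<le> u" using above G_L uy u0 unfolding chain_def by blast
    then show ?thesis
    proof
      assume "u0 \<le> u"
      then show ?thesis
        using map_comp[OF pQ u0Q uQ u0(2) _ z(2)] z(3) G_agree[OF u0(1) uy(1)] by simp
    next
      assume "u \<le> u0"
      then have "y0 = c *s f u u0 y"
        using map_comp[OF pQ uQ u0Q uy(2) _ z(2)] z(3) c map_scale[OF uQ u0Q _ y_V[OF uy(1)]]
        by simp
      then have "c *s y0 = 1 *s y0" using G_agree[OF uy(1) u0(1) \<open>u \<le> u0\<close>] by simp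
      then have "c = 1" using \<open>y0 \<noteq> 0\<close> scale_cancel_right by blast
      then show ?thesis using c by simp
    qed
  qed
  then show ?thesis using z(1) by blast
qed

lemma partial_preimages_extend:
  assumes G: "G \<in> partial_preimages" and p: "p \<in> L" "p \<notin> Domain G"
  shows "\<exists>G'\<in>partial_preimages. G \<subseteq> G' \<and> p \<in> Domain G'"
proof -
  note G_L = compatible_familiesD(1)[OF G] and G_E = compatible_familiesD(3)[OF G]
    and G_agree = compatible_familiesD(4)[OF G] and G_up = compatible_familiesD(5)[OF G]
  have "(q, v) \<in> G" using compatible_familiesD(2)[OF G] .
  obtain z where z: "z \<in> eventual_image L p" and z_agree: "\<And>u y. (u, y) \<in> G \<Longrightarrow> p \<le> u \<Longrightarrow> f p u z = y"
    using compatible_preimage_exists[OF assms] by blast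
  have pQ: "p \<in> Q" and zV: "z \<in> V p" using p L(1) eventual_image_subset_V z by blast+
  define G' where "G' = G \<union> {(r, f p r z) | r. r \<in> L \<and> p \<le> r \<and> r \<notin> Domain G}"
  have new: "r \<in> L \<and> p \<le> r \<and> y = f p r z \<and> r \<notin> Domain G" if "(r, y) \<in> G'" "(r, y) \<notin> G" for r y
    using that unfolding G'_def by blast
  have G'_L: "r \<in> L" if "(r, y) \<in> G'" for r y
    using that G_L unfolding G'_def by blast
  have "G' \<in> partial_preimages"
  proof (rule compatible_familiesI)
    show "(q, v) \<in> G'" using \<open>(q, v) \<in> G\<close> unfolding G'_def by blast
  next
    fix r y assume "(r, y) \<in> G'"
    then show "r \<in> L" by (rule G'_L)
  next
    fix r y assume "(r, y) \<in> G'"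
    then show "y \<in> eventual_image L r"
    proof (cases "(r, y) \<in> G")
      case False
      then have r: "r \<in> L" "p \<le> r" "y = f p r z" "r \<noteq> q"
        using new[OF \<open>(r, y) \<in> G'\<close>] \<open>(q, v) \<in> G\<close> by blast+
      then have "Complete_Partial_Order.chain (\<le>) {a\<in>L. a \<le> r}"
        using branch unfolding branches_only_at_def by blast
      then show ?thesis using map_eventual_image[OF L(1) p(1) r(1,2) _ z] r(3) by simp
    qed (rule G_E)
  next
    fix r y r' y' assume ry: "(r, y) \<in> G'" "(r', y') \<in> G'" "r \<le> r'"
    show "f r r' y = y'"
    proof (cases "(r, y) \<in> G")
      case True
      show ?thesis
      proof (cases "(r', y') \<in> G")
        case False
        then show ?thesis using new[OF ry(2)] G_up[OF True _ ry(3)] by blast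
      qed (rule G_agree[OF True _ ry(3)])
    next
      case False
      then have r: "r \<in> L" "p \<le> r" "y = f p r z" using new[OF ry(1)] by blast+
      have Q: "r \<in> Q" "r' \<in> Q" using G'_L ry L(1) by blast+
      have "f r r' y = f p r' z" using map_comp[OF pQ Q r(2) ry(3) zV] r(3) by simp
      moreover have "f p r' z = y'" if "(r', y') \<in> G"
        using z_agree[OF that] r(2) ry(3) by (blast dest: order_trans)
      ultimately show ?thesis using new[OF ry(2)] by blast
    qed
  next
    fix r y r' assume ry: "(r, y) \<in> G'" "r' \<in> L" "r \<le> r'"
    show "r' \<in> Domain G'"
    proof (cases "r' \<in> Domain G")
      case False
      have "p \<le> r'"
      proof (cases "(r, y) \<in> G")
        case True
        then show ?thesis using G_up[OF True ry(2,3)] False by blast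
      next
        case False
        then show ?thesis using new[OF ry(1)] ry(3) by (blast dest: order_trans)
      qed
      then show ?thesis using False ry(2) unfolding G'_def by blast
    qed (auto simp: G'_def)
  qed
  moreover have "G \<subseteq> G'" "p \<in> Domain G'" using p unfolding G'_def by blast+
  ultimately show ?thesis by blast
qed

lemma coherent_preimages_exist:
  "\<exists>x. (\<forall>p\<in>L. x p \<in> V p \<and> f p q (x p) = v) \<and> (\<forall>p\<in>L. \<forall>p'\<in>L. p \<le> p' \<longrightarrow> f p p' (x p) = x p')"
proof -
  have qQ: "q \<in> Q" using L by blast
  have "v \<in> eventual_image L q" using v(3) unfolding eventual_image_def by blast
  have "\<exists>x. x q = v \<and> (\<forall>p\<in>L. x p \<in> eventual_image L p) \<and>
      (\<forall>p\<in>L. \<forall>p'\<in>L. p \<le> p' \<longrightarrow> f p p' (x p) = x p')"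
  proof (rule compatible_section_exists[where admissible = "\<lambda>p y. y \<in> eventual_image L p"
        and agree = "\<lambda>p y p' y'. f p p' y = y'" and R = "(\<le>)"])
    show "f q q v = v" by (rule map_id[OF qQ v(1)])
    show "p = q" if "p \<in> L" "q \<le> p" for p by (rule antisym[OF L(3)[OF that(1)] that(2)])
    show "\<exists>G'\<in>partial_preimages. G \<subseteq> G' \<and> p \<in> Domain G'"
      if "G \<in> partial_preimages" "p \<in> L" "p \<notin> Domain G" for G p
      by (rule partial_preimages_extend[OF that])
  qed (fact L(2) \<open>v \<in> eventual_image L q\<close>)+
  then obtain x where x: "x q = v" "\<forall>p\<in>L. x p \<in> eventual_image L p"
    "\<forall>p\<in>L. \<forall>p'\<in>L. p \<le> p' \<longrightarrow> f p p' (x p) = x p'"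
    by (elim exE conjE) (rule that)
  show ?thesis
  proof (intro exI conjI ballI impI)
    fix p assume p: "p \<in> L"
    show "x p \<in> V p" using x(2) p eventual_image_subset_V[OF L(1) p] by blast
    show "f p q (x p) = v" using x(3) p L(2,3) x(1) by simp
  next
    fix p p' assume "p \<in> L" "p' \<in> L" "p \<le> p'"
    then show "f p p' (x p) = x p'" using x(3) by blast
  qed
qed

end

context
  fixes L q v H0
  assumes L: "L \<subseteq> Q" "q \<in> L" "\<And>p. p \<in> L \<Longrightarrow> q \<le> p"
    and branch: "branches_only_at L q" and v: "v \<in> V q"
    and H0: "line_complement (V q) v H0"
    and H0_kernels: "\<And>r z. r \<in> L \<Longrightarrow> z \<in> V q \<Longrightarrow> f q r z = 0 \<Longrightarrow> z \<in> H0"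
begin

(* The kernel condition makes preimages of admissible hyperplanes admissible again. *)
abbreviation admissible_hyperplane :: "'q \<Rightarrow> 'v set \<Rightarrow> bool" where
  "admissible_hyperplane p H \<equiv> line_complement (V p) (f q p v) H \<and>
     (\<forall>r\<in>L. p \<le> r \<longrightarrow> (\<forall>z\<in>V p. f p r z = 0 \<longrightarrow> z \<in> H))"

abbreviation partial_hyperplanes :: "('q \<times> 'v set) set set" where
  "partial_hyperplanes \<equiv>
     compatible_families L q H0 admissible_hyperplane (\<lambda>p H p' H'. f p p' ` H \<subseteq> H') (\<lambda>p p'. p' \<le> p)"

lemma compatible_hyperplane_exists:
  assumes G: "G \<in> partial_hyperplanes" and p: "p \<in> L" "p \<notin> Domain G"
  shows "\<exists>Hp. admissible_hyperplane p Hp \<and> (\<forall>d H. (d, H) \<in> G \<longrightarrow> d \<le> p \<longrightarrow> f d p ` H \<subseteq> Hp)"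
proof -
  note G_L = compatible_familiesD(1)[OF G] and G_adm = compatible_familiesD(3)[OF G]
    and G_agree = compatible_familiesD(4)[OF G]
  have "(q, H0) \<in> G" using compatible_familiesD(2)[OF G] .
  then have "p \<noteq> q" using p(2) by blast
  have pQ: "p \<in> Q" and qQ: "q \<in> Q" and "q \<le> p" using p(1) L by blast+
  have below: "Complete_Partial_Order.chain (\<le>) {a\<in>L. a \<le> p}"
    and above: "Complete_Partial_Order.chain (\<le>) {a\<in>L. p \<le> a}"
    using branch p(1) \<open>p \<noteq> q\<close> unfolding branches_only_at_def by blast+
  have wV: "f q p v \<in> V p" using map_in_V[OF qQ pQ \<open>q \<le> p\<close> v] .
  have G_sub: "H \<subseteq> V d" "subspace H" if "(d, H) \<in> G" for d H
    using G_adm[OF that] unfolding line_complement_def by blast+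
  define \<SS> where "\<SS> = {f d p ` H | d H. (d, H) \<in> G \<and> d \<le> p}"
  define \<KK> where "\<KK> = {{z\<in>V p. f p r z = 0} | r. r \<in> L \<and> p \<le> r}"
  define S where "S = \<Union>\<SS>"
  define K where "K = \<Union>\<KK>"
  have S: "subspace S" "S \<subseteq> V p"
  proof -
    have mono: "f d p ` H \<subseteq> f d' p ` H'"
      if "(d, H) \<in> G" "(d', H') \<in> G" "d \<le> d'" "d' \<le> p" for d H d' H'
    proof -
      have Q: "d \<in> Q" "d' \<in> Q" using that(1,2) G_L L(1) by blast+
      have "f d p h = f d' p (f d d' h)" if "h \<in> H" for h
        using map_comp[OF Q pQ \<open>d \<le> d'\<close> \<open>d' \<le> p\<close>] G_sub(1)[OF \<open>(d, H) \<in> G\<close>] that by auto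
      then show ?thesis using G_agree[OF that(1-3)] by blast
    qed
    have "Complete_Partial_Order.chain (\<subseteq>) \<SS>"
      unfolding chain_def
    proof (intro ballI)
      fix X Y assume "X \<in> \<SS>" "Y \<in> \<SS>"
      then obtain d H d' H' where X: "X = f d p ` H" "(d, H) \<in> G" "d \<le> p"
        and Y: "Y = f d' p ` H'" "(d', H') \<in> G" "d' \<le> p"
        unfolding \<SS>_def by blast
      have "d \<in> {a\<in>L. a \<le> p}" "d' \<in> {a\<in>L. a \<le> p}" using X(2,3) Y(2,3) G_L by blast+
      then have "d \<le> d' \<or> d' \<le> d" using below unfolding chain_def by blast
      then show "X \<subseteq> Y \<or> Y \<subseteq> X" using mono X Y by blast
    qed
    moreover have "subspace X \<and> X \<subseteq> V p" if X_in: "X \<in> \<SS>" for X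
    proof -
      obtain d H where X: "X = f d p ` H" "(d, H) \<in> G" "d \<le> p" using X_in unfolding \<SS>_def by blast
      have "d \<in> Q" using X(2) G_L L(1) by blast
      then show ?thesis
        using subspace_map_image[OF _ pQ X(3) G_sub(2)[OF X(2)] G_sub(1)[OF X(2)]]
          map_in_V[OF _ pQ X(3)] G_sub(1)[OF X(2)] X(1) by blast
    qed
    moreover have "\<SS> \<noteq> {}" using \<open>(q, H0) \<in> G\<close> \<open>q \<le> p\<close> unfolding \<SS>_def by blast
    ultimately show "subspace S" "S \<subseteq> V p" unfolding S_def using subspace_Union_chain by blast+
  qed
  have K: "subspace K" "K \<subseteq> V p"
  proof -
    have "Complete_Partial_Order.chain (\<subseteq>) \<KK>"
      unfolding chain_def
    proof (intro ballI)
      fix X Y assume "X \<in> \<KK>" "Y \<in> \<KK>"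
      then obtain r r' where X: "X = {z\<in>V p. f p r z = 0}" "r \<in> L" "p \<le> r"
        and Y: "Y = {z\<in>V p. f p r' z = 0}" "r' \<in> L" "p \<le> r'"
        unfolding \<KK>_def by blast
      have "r \<in> {a\<in>L. p \<le> a}" "r' \<in> {a\<in>L. p \<le> a}" using X(2,3) Y(2,3) by blast+
      then have "r \<le> r' \<or> r' \<le> r" using above unfolding chain_def by blast
      moreover have "r \<in> Q" "r' \<in> Q" using X(2) Y(2) L(1) by blast+
      ultimately show "X \<subseteq> Y \<or> Y \<subseteq> X" using map_kernel_mono[OF pQ] X Y by blast
    qed
    moreover have "subspace X \<and> X \<subseteq> V p" if X_in: "X \<in> \<KK>" for X
    proof -
      obtain r where X: "X = {z\<in>V p. f p r z = 0}" "r \<in> L" "p \<le> r"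
        using X_in unfolding \<KK>_def by blast
      then show ?thesis using subspace_map_preimage[OF pQ _ X(3) subspace_single_0] L(1) by auto
    qed
    moreover have "\<KK> \<noteq> {}" using p(1) unfolding \<KK>_def by blast
    ultimately show "subspace K" "K \<subseteq> V p" unfolding K_def using subspace_Union_chain by blast+
  qed
  have "f q p v \<notin> {a + b | a b. a \<in> S \<and> b \<in> K}"
  proof
    assume "f q p v \<in> {a + b | a b. a \<in> S \<and> b \<in> K}"
    then obtain d H h r where dH: "(d, H) \<in> G" "d \<le> p" "h \<in> H" and r: "r \<in> L" "p \<le> r"
      and b: "f q p v - f d p h \<in> V p" "f p r (f q p v - f d p h) = 0"
      unfolding S_def K_def \<SS>_def \<KK>_def by (auto simp: algebra_simps)
    have dQ: "d \<in> Q" and rQ: "r \<in> Q" and "d \<le> r" "q \<le> d"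
      using dH r G_L L order_trans by blast+
    have hV: "h \<in> V d" and wdV: "f q d v \<in> V d"
      using G_sub(1)[OF dH(1)] dH(3) map_in_V[OF qQ dQ \<open>q \<le> d\<close> v]
      by blast+
    have "f d p (f q d v - h) = f q p v - f d p h"
      using map_diff[OF dQ pQ dH(2) wdV hV] map_comp[OF qQ dQ pQ \<open>q \<le> d\<close> dH(2) v] by simp
    then have "f d r (f q d v - h) = 0"
      using map_comp[OF dQ pQ rQ dH(2) r(2)] subspace_diff[OF subspace_V[OF dQ] wdV hV] b(2)
      by metis
    then have "f q d v - h \<in> H"
      using G_adm[OF dH(1)] r(1) \<open>d \<le> r\<close> subspace_diff[OF subspace_V[OF dQ] wdV hV] by blast
    then have "f q d v \<in> H" using subspace_add[OF G_sub(2)[OF dH(1)] _ dH(3)] by fastforce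
    then show False using G_adm[OF dH(1)] unfolding line_complement_def by blast
  qed
  moreover have "{a + b | a b. a \<in> S \<and> b \<in> K} \<subseteq> V p"
    using S K subspace_add[OF subspace_V[OF pQ]] by blast
  ultimately obtain Hp
    where Hp: "{a + b | a b. a \<in> S \<and> b \<in> K} \<subseteq> Hp" "line_complement (V p) (f q p v) Hp"
    using line_complement_exists[OF subspace_sums[OF S(1) K(1)] _ subspace_V[OF pQ] wV] by blast
  have "a + 0 \<in> Hp" if "a \<in> S" for a using Hp(1) subspace_0[OF K(1)] that by blast
  moreover have "0 + b \<in> Hp" if "b \<in> K" for b using Hp(1) subspace_0[OF S(1)] that by blast
  ultimately have "S \<subseteq> Hp" "K \<subseteq> Hp" by auto
  then show ?thesis using Hp(2) p(1) unfolding S_def K_def \<SS>_def \<KK>_def by blast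
qed

lemma admissible_hyperplane_preimage:
  assumes r: "r \<in> L" "r \<noteq> q" and p: "p \<in> L" "r \<le> p" and Hp: "admissible_hyperplane p Hp"
  shows "admissible_hyperplane r {z\<in>V r. f r p z \<in> Hp}"
proof -
  have Q: "r \<in> Q" "p \<in> Q" "q \<in> Q" using r p L by blast+
  have "q \<le> r" using L(3) r(1) by blast
  have Hp_sub: "subspace Hp" "f q p v \<notin> Hp" "\<forall>z\<in>V p. \<exists>h\<in>Hp. \<exists>c. z = h + c *s f q p v"
    using Hp unfolding line_complement_def by blast+
  have wr: "f q r v \<in> V r" "f r p (f q r v) = f q p v"
    using map_in_V[OF Q(3,1) \<open>q \<le> r\<close> v] map_comp[OF Q(3,1,2) \<open>q \<le> r\<close> p(2) v] by blast+
  have "\<exists>h\<in>{z\<in>V r. f r p z \<in> Hp}. \<exists>c. z = h + c *s f q r v" if z: "z \<in> V r" for z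
  proof -
    obtain h c where hc: "h \<in> Hp" "f r p z = h + c *s f q p v"
      using Hp_sub(3) map_in_V[OF Q(1,2) p(2) z] by blast
    have scV: "c *s f q r v \<in> V r" using subspace_scale[OF subspace_V[OF Q(1)] wr(1)] .
    have "f r p (z - c *s f q r v) = h"
      using map_diff[OF Q(1,2) p(2) z scV] map_scale[OF Q(1,2) p(2) wr(1)] wr(2) hc(2) by simp
    then have "z - c *s f q r v \<in> {z\<in>V r. f r p z \<in> Hp}"
      using hc(1) subspace_diff[OF subspace_V[OF Q(1)] z scV] by simp
    then show ?thesis by (intro bexI[of _ "z - c *s f q r v"] exI[of _ c]) auto
  qed
  moreover have "z \<in> {z\<in>V r. f r p z \<in> Hp}"
    if r': "r' \<in> L" "r \<le> r'" and z: "z \<in> V r" "f r r' z = 0" for r' z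
  proof -
    have r'Q: "r' \<in> Q" using r' L(1) by blast
    have "r' \<le> p \<or> p \<le> r'"
      using branch r r' p unfolding branches_only_at_def chain_def by blast
    then have "f r p z \<in> Hp"
    proof
      assume "r' \<le> p"
      then have "f r p z = 0"
        using map_comp[OF Q(1) r'Q Q(2) r'(2) _ z(1)] z(2) map_zero[OF r'Q Q(2)] by simp
      then show ?thesis using subspace_0[OF Hp_sub(1)] by simp
    next
      assume "p \<le> r'"
      then have "f p r' (f r p z) = 0" using map_comp[OF Q(1,2) r'Q p(2) _ z(1)] z(2) by simp
      then show ?thesis using Hp r'(1) \<open>p \<le> r'\<close> map_in_V[OF Q(1,2) p(2) z(1)] by blast
    qed
    then show ?thesis using z(1) by simp
  qed
  moreover have "subspace {z\<in>V r. f r p z \<in> Hp}"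
    using subspace_map_preimage[OF Q(1,2) p(2) Hp_sub(1)] .
  moreover have "f q r v \<notin> {z\<in>V r. f r p z \<in> Hp}" using Hp_sub(2) wr(2) by simp
  ultimately show ?thesis unfolding line_complement_def by (intro conjI ballI impI) auto
qed

lemma partial_hyperplanes_extend:
  assumes G: "G \<in> partial_hyperplanes" and p: "p \<in> L" "p \<notin> Domain G"
  shows "\<exists>G'\<in>partial_hyperplanes. G \<subseteq> G' \<and> p \<in> Domain G'"
proof -
  note G_L = compatible_familiesD(1)[OF G] and G_adm = compatible_familiesD(3)[OF G]
    and G_agree = compatible_familiesD(4)[OF G] and G_down = compatible_familiesD(5)[OF G]
  have "(q, H0) \<in> G" using compatible_familiesD(2)[OF G] .
  obtain Hp where Hp: "admissible_hyperplane p Hp"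
    and images: "\<And>d H. (d, H) \<in> G \<Longrightarrow> d \<le> p \<Longrightarrow> f d p ` H \<subseteq> Hp"
    using compatible_hyperplane_exists[OF assms] by blast
  have pQ: "p \<in> Q" using p L(1) by blast
  define P where "P r = {z\<in>V r. f r p z \<in> Hp}" for r
  define G' where "G' = G \<union> {(r, P r) | r. r \<in> L \<and> r \<le> p \<and> r \<notin> Domain G}"
  have new: "r \<in> L \<and> r \<le> p \<and> H = P r \<and> r \<notin> Domain G" if "(r, H) \<in> G'" "(r, H) \<notin> G" for r H
    using that unfolding G'_def by blast
  have G'_L: "r \<in> L" if "(r, H) \<in> G'" for r H
    using that G_L unfolding G'_def by blast
  have G_sub: "H \<subseteq> V d" if "(d, H) \<in> G" for d H
    using G_adm[OF that] unfolding line_complement_def by blast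
  have "G' \<in> partial_hyperplanes"
  proof (rule compatible_familiesI)
    show "(q, H0) \<in> G'" using \<open>(q, H0) \<in> G\<close> unfolding G'_def by blast
  next
    fix r H assume "(r, H) \<in> G'"
    then show "admissible_hyperplane r H"
    proof (cases "(r, H) \<in> G")
      case False
      then have "r \<in> L" "r \<le> p" "H = P r" "r \<noteq> q"
        using new[OF \<open>(r, H) \<in> G'\<close>] \<open>(q, H0) \<in> G\<close> by blast+
      then show ?thesis
        using admissible_hyperplane_preimage[OF _ _ p(1) _ Hp] unfolding P_def by blast
    qed (rule G_adm)
  next
    fix r H r' H' assume rH: "(r, H) \<in> G'" "(r', H') \<in> G'" "r \<le> r'"
    have Q: "r \<in> Q" "r' \<in> Q" using G'_L rH(1,2) L(1) by blast+
    show "f r r' ` H \<subseteq> H'"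
    proof (cases "(r', H') \<in> G")
      case True
      then have "(r, H) \<in> G" using new[OF rH(1)] G_down[OF True _ rH(3)] G'_L[OF rH(1)] by blast
      then show ?thesis using G_agree[OF _ True rH(3)] by blast
    next
      case False
      then have r': "r' \<le> p" "H' = P r'" using new[OF rH(2)] by blast+
      have "f r' p (f r r' h) = f r p h" "f r r' h \<in> V r'" if "h \<in> V r" for h
        using map_comp[OF Q pQ rH(3) r'(1) that] map_in_V[OF Q rH(3) that] by blast+
      moreover have "f r p h \<in> Hp" "h \<in> V r" if "h \<in> H" for h
        using that images new[OF rH(1)] G_sub rH(3) r'(1) unfolding P_def
        by (cases "(r, H) \<in> G"; blast dest: order_trans)+
      ultimately show ?thesis unfolding r'(2) P_def by auto
    qed
  next
    fix r H assume "(r, H) \<in> G'"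
    then show "r \<in> L" by (rule G'_L)
  next
    fix r H r' assume rH: "(r, H) \<in> G'" "r' \<in> L" "r' \<le> r"
    show "r' \<in> Domain G'"
    proof (cases "r' \<in> Domain G")
      case False
      have "r' \<le> p"
      proof (cases "(r, H) \<in> G")
        case True
        then show ?thesis using G_down[OF True rH(2,3)] False by blast
      next
        case False
        then show ?thesis using new[OF rH(1)] rH(3) by (blast dest: order_trans)
      qed
      then show ?thesis using False rH(2) unfolding G'_def by blast
    qed (auto simp: G'_def)
  qed
  moreover have "G \<subseteq> G'" "p \<in> Domain G'" using p unfolding G'_def by blast+
  ultimately show ?thesis by blast
qed

lemma coherent_hyperplanes_exist:
  "\<exists>Hs. Hs q = H0 \<and> (\<forall>p\<in>L. line_complement (V p) (f q p v) (Hs p)) \<and>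
     (\<forall>p\<in>L. \<forall>p'\<in>L. p \<le> p' \<longrightarrow> f p p' ` Hs p \<subseteq> Hs p')"
proof -
  have qQ: "q \<in> Q" using L by blast
  have H0_V: "H0 \<subseteq> V q" using H0 unfolding line_complement_def by blast
  have "\<exists>Hs. Hs q = H0 \<and> (\<forall>p\<in>L. admissible_hyperplane p (Hs p)) \<and>
      (\<forall>p\<in>L. \<forall>p'\<in>L. p \<le> p' \<longrightarrow> f p p' ` Hs p \<subseteq> Hs p')"
  proof (rule compatible_section_exists[where admissible = admissible_hyperplane
        and agree = "\<lambda>p H p' H'. f p p' ` H \<subseteq> H'" and R = "\<lambda>p p'. p' \<le> p"])
    show "admissible_hyperplane q H0"
      using H0 H0_kernels map_id[OF qQ v] by simp
    show "f q q ` H0 \<subseteq> H0" using map_id[OF qQ] H0_V by auto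
    show "p = q" if "p \<in> L" "p \<le> q" for p by (rule antisym[OF that(2) L(3)[OF that(1)]])
    show "\<exists>G'\<in>partial_hyperplanes. G \<subseteq> G' \<and> p \<in> Domain G'"
      if "G \<in> partial_hyperplanes" "p \<in> L" "p \<notin> Domain G" for G p
      by (rule partial_hyperplanes_extend[OF that])
  qed (fact L(2))
  then obtain Hs where Hs: "Hs q = H0" "\<forall>p\<in>L. admissible_hyperplane p (Hs p)"
    "\<forall>p\<in>L. \<forall>p'\<in>L. p \<le> p' \<longrightarrow> f p p' ` Hs p \<subseteq> Hs p'"
    by (elim exE conjE) (rule that)
  then show ?thesis by blast
qed

end

context
  fixes q v Ld x Lu Hs
  assumes q: "q \<in> Q" and v: "v \<in> V q" "v \<noteq> 0"
    and Ld: "Ld \<subseteq> Q" "q \<in> Ld" "\<And>p. p \<in> Ld \<Longrightarrow> p \<le> q"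
    and x: "\<And>p. p \<in> Ld \<Longrightarrow> x p \<in> V p" "\<And>p. p \<in> Ld \<Longrightarrow> f p q (x p) = v"
      "\<And>p p'. p \<in> Ld \<Longrightarrow> p' \<in> Ld \<Longrightarrow> p \<le> p' \<Longrightarrow> f p p' (x p) = x p'"
    and Ld_complete: "\<And>p. p \<in> Q \<Longrightarrow> p \<le> q \<Longrightarrow> p \<notin> Ld \<Longrightarrow> f p q ` V p \<subseteq> Hs q"
    and Lu: "Lu \<subseteq> Q" "q \<in> Lu" "\<And>p. p \<in> Lu \<Longrightarrow> q \<le> p"
    and Hs: "\<And>p. p \<in> Lu \<Longrightarrow> line_complement (V p) (f q p v) (Hs p)"
      "\<And>p p'. p \<in> Lu \<Longrightarrow> p' \<in> Lu \<Longrightarrow> p \<le> p' \<Longrightarrow> f p p' ` Hs p \<subseteq> Hs p'"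
    and Lu_complete: "\<And>p. p \<in> Q \<Longrightarrow> q \<le> p \<Longrightarrow> p \<notin> Lu \<Longrightarrow> f q p v = 0"
    and comparable: "\<And>p. p \<in> Q \<Longrightarrow> p \<le> q \<or> q \<le> p \<or> V p = {0}"
begin

definition thin_vector :: "'q \<Rightarrow> 'v" where
  "thin_vector p = (if p \<le> q then if p \<in> Ld then x p else 0 else if q \<le> p then f q p v else 0)"

definition thin_complement :: "'q \<Rightarrow> 'v set" where
  "thin_complement p = (if p \<le> q then {z\<in>V p. f p q z \<in> Hs q} else if p \<in> Lu then Hs p else V p)"

lemma lift_at_base: "x q = v"
  using x(1,2)[OF Ld(2)] map_id[OF q] by simp

lemma hyperplane_at_base: "line_complement (V q) v (Hs q)"
  using Hs(1)[OF Lu(2)] map_id[OF q v(1)] by simp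

lemma thin_vector_in_V: "p \<in> Q \<Longrightarrow> thin_vector p \<in> V p"
  unfolding thin_vector_def using x(1) zero_in_V map_in_V[OF q _ _ v(1)] by auto

lemma thin_vector_coherent:
  assumes p: "p \<in> Q" "p' \<in> Q" "p \<le> p'" and np: "thin_vector p \<noteq> 0"
  shows "f p p' (thin_vector p) = thin_vector p'"
proof (cases "p \<le> q")
  case True
  then have pLd: "p \<in> Ld" and np_x: "thin_vector p = x p"
    using np unfolding thin_vector_def by (auto split: if_splits)
  consider "p' \<le> q" | "\<not> p' \<le> q" "q \<le> p'" | "\<not> p' \<le> q" "\<not> q \<le> p'" by blast
  then show ?thesis
  proof cases
    case 1
    have "p' \<in> Ld"
    proof (rule ccontr)
      assume "p' \<notin> Ld"
      then have "f p' q (f p p' (x p)) \<in> Hs q"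
        using Ld_complete[OF p(2) 1] map_in_V[OF p x(1)[OF pLd]] by blast
      then show False
        using map_comp[OF p(1,2) q p(3) 1 x(1)[OF pLd]] x(2)[OF pLd] hyperplane_at_base
        unfolding line_complement_def by simp
    qed
    then show ?thesis using x(3)[OF pLd _ p(3)] np_x 1 unfolding thin_vector_def by simp
  next
    case 2
    then show ?thesis
      using map_comp[OF p(1) q p(2) True 2(2) x(1)[OF pLd]] x(2)[OF pLd] np_x
      unfolding thin_vector_def by simp
  next
    case 3
    then have "V p' = {0}" using comparable[OF p(2)] by blast
    then show ?thesis
      using map_in_V[OF p thin_vector_in_V[OF p(1)]] 3 unfolding thin_vector_def by simp
  qed
next
  case False
  then have "q \<le> p" "thin_vector p = f q p v"
    using np unfolding thin_vector_def by (auto split: if_splits)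
  moreover have "\<not> p' \<le> q" "q \<le> p'" using False \<open>q \<le> p\<close> p(3) order_trans by blast+
  ultimately show ?thesis
    using map_comp[OF q p(1,2) \<open>q \<le> p\<close> p(3) v(1)] unfolding thin_vector_def by simp
qed

lemma thin_complement_submod: "submod scale Q V f thin_complement"
  unfolding submod_def
proof (intro conjI ballI impI)
  fix p assume p: "p \<in> Q"
  have "subspace (Hs q)" using line_complementD(1)[OF hyperplane_at_base] .
  moreover have "subspace (Hs p) \<and> Hs p \<subseteq> V p" if "p \<in> Lu"
    using line_complementD(1,2)[OF Hs(1)[OF that]] by blast
  ultimately show "subspace (thin_complement p)" "thin_complement p \<subseteq> V p"
    unfolding thin_complement_def using subspace_map_preimage[OF p q] subspace_V[OF p] Lu(2) by auto
next
  fix p p' z assume p: "p \<in> Q" "p' \<in> Q" "p \<le> p'" and z: "z \<in> thin_complement p"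
  have Hs_0: "0 \<in> Hs r" if "r \<in> Lu" for r
    using line_complementD(1)[OF Hs(1)[OF that]] subspace_0 by blast
  show "f p p' z \<in> thin_complement p'"
  proof (cases "p \<le> q")
    case True
    then have zV: "z \<in> V p" and zH: "f p q z \<in> Hs q" using z unfolding thin_complement_def by auto
    consider "p' \<le> q" | "\<not> p' \<le> q" "p' \<in> Lu" | "\<not> p' \<le> q" "p' \<notin> Lu" by blast
    then show ?thesis
    proof cases
      case 1
      then show ?thesis using map_comp[OF p(1,2) q p(3) 1 zV] map_in_V[OF p zV] zH
        unfolding thin_complement_def by simp
    next
      case 2
      then have "q \<le> p'" using Lu(3) by blast
      then have "f p p' z = f q p' (f p q z)" using map_comp[OF p(1) q p(2) True _ zV] by simp
      then show ?thesis
        using Hs(2)[OF Lu(2) 2(2) \<open>q \<le> p'\<close>] zH 2 unfolding thin_complement_def by auto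
    next
      case 3
      then show ?thesis using map_in_V[OF p zV] unfolding thin_complement_def by simp
    qed
  next
    case False
    then have p'q: "\<not> p' \<le> q" using p(3) order_trans by blast
    consider "p \<in> Lu" | "p \<notin> Lu" "p' \<notin> Lu" | "p \<notin> Lu" "p' \<in> Lu" by blast
    then show ?thesis
    proof cases
      case 1
      then have zH: "z \<in> Hs p" using z False unfolding thin_complement_def by simp
      then have "z \<in> V p" using line_complementD(2)[OF Hs(1)[OF 1]] by blast
      then show ?thesis
        using Hs(2)[OF 1 _ p(3)] zH map_in_V[OF p] p'q unfolding thin_complement_def by auto
    next
      case 2
      then show ?thesis using z map_in_V[OF p] False p'q unfolding thin_complement_def by simp
    next
      case 3
      have "z = 0"
      proof (cases "q \<le> p")
        case True
        then have "f q p' v = 0"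
          using Lu_complete[OF p(1) True 3(1)] map_comp[OF q p(1,2) True p(3) v(1)] map_zero[OF p]
          by simp
        then show ?thesis using line_complementD(3)[OF Hs(1)[OF 3(2)]] Hs_0[OF 3(2)] by simp
      next
        case False
        then show ?thesis using comparable[OF p(1)] \<open>\<not> p \<le> q\<close> z 3(1)
          unfolding thin_complement_def by auto
      qed
      then show ?thesis
        using map_zero[OF p] Hs_0[OF 3(2)] p'q 3(2) unfolding thin_complement_def by simp
    qed
  qed
qed

lemma thin_complement_spans:
  assumes p: "p \<in> Q" and z: "z \<in> V p"
  shows "\<exists>c. \<exists>b\<in>thin_complement p. z = c *s thin_vector p + b"
proof (cases "p \<le> q")
  case True
  show ?thesis
  proof (cases "p \<in> Ld")
    case pLd: True
    obtain h c where hc: "h \<in> Hs q" "f p q z = h + c *s v"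
      using line_complement_decompose[OF hyperplane_at_base map_in_V[OF p q True z]] .
    have xV: "c *s x p \<in> V p" using subspace_scale[OF subspace_V[OF p] x(1)[OF pLd]] .
    have "f p q (z - c *s x p) = h"
      using map_diff[OF p q True z xV] map_scale[OF p q True x(1)[OF pLd]] x(2)[OF pLd] hc(2)
      by simp
    then have "z - c *s x p \<in> thin_complement p"
      using hc(1) True subspace_diff[OF subspace_V[OF p] z xV] unfolding thin_complement_def by simp
    moreover have "z = c *s thin_vector p + (z - c *s x p)"
      using True pLd unfolding thin_vector_def by simp
    ultimately show ?thesis by blast
  next
    case False
    have "f p q z \<in> Hs q" using Ld_complete[OF p True False] z by blast
    then have "z \<in> thin_complement p" using z True unfolding thin_complement_def by simp
    then show ?thesis by (intro exI[of _ 0] bexI[of _ z]) auto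
  qed
next
  case False
  show ?thesis
  proof (cases "p \<in> Lu")
    case True
    obtain h c where hc: "h \<in> Hs p" "z = h + c *s f q p v"
      using line_complement_decompose[OF Hs(1)[OF True] z] .
    then have "z = c *s thin_vector p + h" using False Lu(3)[OF True] unfolding thin_vector_def
      by (simp add: add.commute)
    then show ?thesis using hc(1) False True unfolding thin_complement_def by auto
  next
    case pLu: False
    then have "z \<in> thin_complement p" using z False unfolding thin_complement_def by simp
    then show ?thesis by (intro exI[of _ 0] bexI[of _ z]) auto
  qed
qed

lemma thin_complement_avoids:
  assumes p: "p \<in> Q" and c: "c *s thin_vector p \<in> thin_complement p"
  shows "c = 0 \<or> thin_vector p = 0"
proof (cases "p \<le> q")
  case True
  show ?thesis
  proof (cases "p \<in> Ld")
    case pLd: True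
    then have "f p q (c *s x p) \<in> Hs q"
      using c True unfolding thin_vector_def thin_complement_def by simp
    then have "c *s v \<in> Hs q" using map_scale[OF p q True x(1)[OF pLd]] x(2)[OF pLd] by simp
    then show ?thesis
      using line_complementD[OF hyperplane_at_base] scale_mem_subspace_iff[of "Hs q" c v] by blast
  qed (simp add: thin_vector_def True)
next
  case False
  show ?thesis
  proof (cases "q \<le> p \<and> p \<in> Lu")
    case True
    then have "c *s f q p v \<in> Hs p"
      using c False unfolding thin_vector_def thin_complement_def by simp
    then show ?thesis
      using line_complementD[OF Hs(1)[OF conjunct2[OF True]]]
        scale_mem_subspace_iff[of "Hs p" c "f q p v"]
      by blast
  next
    case False
    then show ?thesis using Lu_complete[OF p] \<open>\<not> p \<le> q\<close> unfolding thin_vector_def by auto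
  qed
qed

lemma interval_module_if_lift_and_hyperplanes:
  assumes "indecomposable scale Q V f"
  shows is_interval_module
proof (rule interval_module_if_thin_summand[where n = thin_vector and C = thin_complement,
      OF assms q])
  show "thin_vector q \<noteq> 0" using lift_at_base v(2) Ld(2) unfolding thin_vector_def by simp
  show "p \<le> q \<or> q \<le> p" if "thin_vector p \<noteq> 0" for p
    using that unfolding thin_vector_def by (auto split: if_splits)
qed (fact thin_vector_in_V thin_vector_coherent thin_complement_submod thin_complement_spans
    thin_complement_avoids)+

end

lemma interval_module_if_supported_on_chain:
  assumes indec: "indecomposable scale Q V f" and C: "Complete_Partial_Order.chain (\<le>) C"
    and supp: "\<And>p. p \<in> Q \<Longrightarrow> V p \<noteq> {0} \<Longrightarrow> p \<in> C"
  shows is_interval_module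
proof -
  obtain q where q: "q \<in> Q" "V q \<noteq> {0}" using indec unfolding indecomposable_def by blast
  have comparable: "p \<le> q \<or> q \<le> p \<or> V p = {0}" if "p \<in> Q" for p
    using C supp[OF that] supp[OF q] unfolding chain_def by blast
  have nonzero_cmp: "p \<le> p' \<or> p' \<le> p" if "p \<in> Q" "p' \<in> Q" "V p \<noteq> {0}" "V p' \<noteq> {0}" for p p'
    using C supp that unfolding chain_def by blast
  have image_ne: "V p \<noteq> {0}" if "p \<in> Q" "p \<le> q" "f p q ` V p \<noteq> {0}" for p
    using map_zero[OF that(1) q(1) that(2)] that(3) by force
  have vector_ne: "V p \<noteq> {0}" if "p \<in> Q" "q \<le> p" "z \<in> V q" "f q p z \<noteq> 0" for p z
    using map_in_V[OF q(1) that(1,2,3)] that(4) by force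
(* v lies in the least nonzero image from below; H0 contains the greatest kernel above q
     that misses v. *)
  have "\<exists>p0. (p0 \<in> Q \<and> p0 \<le> q \<and> f p0 q ` V p0 \<noteq> {0}) \<and>
    (\<forall>p. p \<in> Q \<and> p \<le> q \<and> f p q ` V p \<noteq> {0} \<longrightarrow> f p0 q ` V p0 \<subseteq> f p q ` V p)"
  proof (rule chain_of_subspaces_of_V_has_least[OF q(1)])
    show "q \<in> Q \<and> q \<le> q \<and> f q q ` V q \<noteq> {0}" using q map_id[OF q(1)] by (auto simp: image_iff)
  next
    fix p assume "p \<in> Q \<and> p \<le> q \<and> f p q ` V p \<noteq> {0}"
    then show "subspace (f p q ` V p) \<and> f p q ` V p \<subseteq> V q"
      using subspace_map_image[OF _ q(1) _ subspace_V] map_in_V[OF _ q(1)] by blast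
  next
    fix p p' assume p: "p \<in> Q \<and> p \<le> q \<and> f p q ` V p \<noteq> {0}"
      and p': "p' \<in> Q \<and> p' \<le> q \<and> f p' q ` V p' \<noteq> {0}"
    then have "p \<le> p' \<or> p' \<le> p"
      using nonzero_cmp[of p p'] image_ne[of p] image_ne[of p'] by auto
    then show "f p q ` V p \<subseteq> f p' q ` V p' \<or> f p' q ` V p' \<subseteq> f p q ` V p"
      using map_image_V_mono[OF _ _ q(1)] p p' by blast
  qed
  then obtain p0 where p0: "p0 \<in> Q" "p0 \<le> q" "f p0 q ` V p0 \<noteq> {0}"
    and least: "\<forall>p. p \<in> Q \<and> p \<le> q \<and> f p q ` V p \<noteq> {0} \<longrightarrow> f p0 q ` V p0 \<subseteq> f p q ` V p"
    by blast
  have "subspace (f p0 q ` V p0)"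
    using subspace_map_image[OF p0(1) q(1) p0(2) subspace_V[OF p0(1)]] by simp
  then obtain v where v_im: "v \<in> f p0 q ` V p0" and "v \<noteq> 0" using p0(3) subspace_0 by blast
  have vV: "v \<in> V q" using v_im map_in_V[OF p0(1) q(1) p0(2)] by blast
  define K where "K p = {z\<in>V q. f q p z = 0}" for p
  have "\<exists>p1. (p1 \<in> Q \<and> q \<le> p1 \<and> f q p1 v \<noteq> 0) \<and>
    (\<forall>p. p \<in> Q \<and> q \<le> p \<and> f q p v \<noteq> 0 \<longrightarrow> K p \<subseteq> K p1)"
  proof (rule chain_of_subspaces_of_V_has_greatest[OF q(1)])
    show "q \<in> Q \<and> q \<le> q \<and> f q q v \<noteq> 0" using q(1) map_id[OF q(1) vV] \<open>v \<noteq> 0\<close> by simp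
  next
    fix p assume "p \<in> Q \<and> q \<le> p \<and> f q p v \<noteq> 0"
    then show "subspace (K p) \<and> K p \<subseteq> V q"
      using subspace_map_preimage[OF q(1) _ _ subspace_single_0] unfolding K_def by auto
  next
    fix p p' assume p: "p \<in> Q \<and> q \<le> p \<and> f q p v \<noteq> 0" and p': "p' \<in> Q \<and> q \<le> p' \<and> f q p' v \<noteq> 0"
    then have "p \<le> p' \<or> p' \<le> p"
      using nonzero_cmp[of p p'] vector_ne[OF _ _ vV, of p] vector_ne[OF _ _ vV, of p'] by auto
    then show "K p \<subseteq> K p' \<or> K p' \<subseteq> K p" using map_kernel_mono[OF q(1)] p p' unfolding K_def by blast
  qed
  then obtain p1 where p1: "p1 \<in> Q" "q \<le> p1" "f q p1 v \<noteq> 0"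
    and greatest: "\<forall>p. p \<in> Q \<and> q \<le> p \<and> f q p v \<noteq> 0 \<longrightarrow> K p \<subseteq> K p1"
    by blast
  have "subspace (K p1)" "K p1 \<subseteq> V q" "v \<notin> K p1"
    using subspace_map_preimage[OF q(1) p1(1,2) subspace_single_0] p1(3) unfolding K_def by auto
  then obtain H0 where H0: "K p1 \<subseteq> H0" "line_complement (V q) v H0"
    using line_complement_exists[OF _ _ subspace_V[OF q(1)] vV] by blast
  define Ld where "Ld = {p\<in>Q. p \<le> q \<and> v \<in> f p q ` V p}"
  define Lu where "Lu = {p\<in>Q. q \<le> p \<and> f q p v \<noteq> 0}"
  have Ld_chain: "Complete_Partial_Order.chain (\<le>) Ld"
    unfolding chain_def
  proof (intro ballI)
    fix a b assume "a \<in> Ld" "b \<in> Ld"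
    then have "a \<in> Q" "b \<in> Q" "a \<le> q" "b \<le> q" "f a q ` V a \<noteq> {0}" "f b q ` V b \<noteq> {0}"
      using \<open>v \<noteq> 0\<close> unfolding Ld_def by auto
    then show "a \<le> b \<or> b \<le> a" using nonzero_cmp[of a b] image_ne[of a] image_ne[of b] by auto
  qed
  have Lu_chain: "Complete_Partial_Order.chain (\<le>) Lu"
    unfolding chain_def
  proof (intro ballI)
    fix a b assume "a \<in> Lu" "b \<in> Lu"
    then have "a \<in> Q" "b \<in> Q" "q \<le> a" "q \<le> b" "f q a v \<noteq> 0" "f q b v \<noteq> 0"
      unfolding Lu_def by auto
    then show "a \<le> b \<or> b \<le> a"
      using nonzero_cmp[of a b] vector_ne[OF _ _ vV, of a] vector_ne[OF _ _ vV, of b] by auto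
  qed
  have Ld: "Ld \<subseteq> Q" "q \<in> Ld" "\<And>p. p \<in> Ld \<Longrightarrow> p \<le> q" "\<And>p. p \<in> Ld \<Longrightarrow> v \<in> f p q ` V p"
    using q(1) image_eqI[where f = "f q q", OF map_id[OF q(1) vV, symmetric] vV]
    unfolding Ld_def by auto
  have Lu: "Lu \<subseteq> Q" "q \<in> Lu" "\<And>p. p \<in> Lu \<Longrightarrow> q \<le> p"
    using q(1) map_id[OF q(1) vV] \<open>v \<noteq> 0\<close> unfolding Lu_def by auto
  have H0_kernels: "z \<in> H0" if "r \<in> Lu" "z \<in> V q" "f q r z = 0" for r z
    using that greatest H0(1) unfolding Lu_def K_def by blast
  have "\<exists>Hs. Hs q = H0 \<and> (\<forall>p\<in>Lu. line_complement (V p) (f q p v) (Hs p)) \<and>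
      (\<forall>p\<in>Lu. \<forall>p'\<in>Lu. p \<le> p' \<longrightarrow> f p p' ` Hs p \<subseteq> Hs p')"
    by (rule coherent_hyperplanes_exist[OF Lu(1,2) _ chain_branches_only_at[OF Lu_chain] vV H0(2)])
      (auto intro: Lu(3) H0_kernels)
  then obtain Hs where Hs: "Hs q = H0" "\<forall>p\<in>Lu. line_complement (V p) (f q p v) (Hs p)"
    "\<forall>p\<in>Lu. \<forall>p'\<in>Lu. p \<le> p' \<longrightarrow> f p p' ` Hs p \<subseteq> Hs p'"
    by (elim exE conjE) (rule that)
  have "\<exists>x. (\<forall>p\<in>Ld. x p \<in> V p \<and> f p q (x p) = v) \<and> (\<forall>p\<in>Ld. \<forall>p'\<in>Ld. p \<le> p' \<longrightarrow> f p p' (x p) = x p')"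
    by (rule coherent_preimages_exist[OF Ld(1,2) _ chain_branches_only_at[OF Ld_chain] vV \<open>v \<noteq> 0\<close>])
      (auto intro: Ld(3,4))
  then obtain x where x: "\<forall>p\<in>Ld. x p \<in> V p \<and> f p q (x p) = v"
    "\<forall>p\<in>Ld. \<forall>p'\<in>Ld. p \<le> p' \<longrightarrow> f p p' (x p) = x p'"
    by (elim exE conjE) (rule that)
  show ?thesis
  proof (rule interval_module_if_lift_and_hyperplanes
        [where Ld = Ld and x = x and Lu = Lu and Hs = Hs,
        OF q(1) vV \<open>v \<noteq> 0\<close>])
    show "f p q ` V p \<subseteq> Hs q" if "p \<in> Q" "p \<le> q" "p \<notin> Ld" for p
    proof -
      have "f p q ` V p = {0}" using least v_im that unfolding Ld_def by blast
      then show ?thesis using Hs(1) H0(2) line_complementD(1) subspace_0 by auto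
    qed
    show "f q p v = 0" if "p \<in> Q" "q \<le> p" "p \<notin> Lu" for p
      using that unfolding Lu_def by blast
  qed (use Ld(1-3) Lu x Hs comparable indec in auto)
qed

lemma interval_module_if_wedge_with_top:
  assumes indec: "indecomposable scale Q V f" and Q: "Q = A \<union> B" and wedge: "wedge A B m"
    and top: "\<And>p. p \<in> Q \<Longrightarrow> p \<le> m" and Vm: "V m \<noteq> {0}"
  shows is_interval_module
proof -
  have mQ: "m \<in> Q" and chA: "Complete_Partial_Order.chain (\<le>) A"
    and chB: "Complete_Partial_Order.chain (\<le>) B"
    using wedge Q unfolding wedge_def by blast+
  define Im where "Im p = f p m ` V p" for p
  have Im_sub: "subspace (Im p) \<and> Im p \<subseteq> V m" if "p \<in> Q" for p
    using subspace_map_image[OF that mQ top[OF that] subspace_V[OF that]]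
      map_in_V[OF that mQ top[OF that]]
    unfolding Im_def by blast
  have Im_cmp: "Im p \<subseteq> Im p' \<or> Im p' \<subseteq> Im p" if "p \<in> Q" "p' \<in> Q" "p \<le> p' \<or> p' \<le> p" for p p'
    using that map_image_V_mono[OF _ _ mQ] top unfolding Im_def by blast
  have Im_m: "Im m = V m" unfolding Im_def using map_id[OF mQ] by force
(* v lies in the least nonzero image along A; the images along B that miss v go into H0. *)
  have "\<exists>pA. (pA \<in> A \<and> Im pA \<noteq> {0}) \<and> (\<forall>p. p \<in> A \<and> Im p \<noteq> {0} \<longrightarrow> Im pA \<subseteq> Im p)"
  proof (rule chain_of_subspaces_of_V_has_least[OF mQ])
    show "m \<in> A \<and> Im m \<noteq> {0}" using wedge Im_m Vm unfolding wedge_def by simp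
  qed (use Im_sub Im_cmp chA Q in \<open>auto simp: chain_def\<close>)
  then obtain pA where pA: "pA \<in> A" "Im pA \<noteq> {0}"
    and least: "\<forall>p. p \<in> A \<and> Im p \<noteq> {0} \<longrightarrow> Im pA \<subseteq> Im p"
    by (elim exE conjE) (rule that)
  obtain v where v: "v \<in> Im pA" "v \<noteq> 0" using Im_sub[of pA] pA Q subspace_0 by blast
  have vV: "v \<in> V m" using v(1) Im_sub[of pA] pA Q by blast
  obtain G where G: "subspace G" "G \<subseteq> V m" "v \<notin> G" "\<And>p. p \<in> B \<Longrightarrow> v \<notin> Im p \<Longrightarrow> Im p \<subseteq> G"
  proof (cases "\<exists>p\<in>B. v \<notin> Im p")
    case True
    then obtain p1 where "p1 \<in> B" "v \<notin> Im p1" by blast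
    then have "\<exists>p0. (p0 \<in> B \<and> v \<notin> Im p0) \<and> (\<forall>p. p \<in> B \<and> v \<notin> Im p \<longrightarrow> Im p \<subseteq> Im p0)"
      by (intro chain_of_subspaces_of_V_has_greatest[OF mQ])
        (use Im_sub Im_cmp chB Q in \<open>auto simp: chain_def\<close>)
    then obtain p0 where "p0 \<in> B" "v \<notin> Im p0" "\<forall>p. p \<in> B \<and> v \<notin> Im p \<longrightarrow> Im p \<subseteq> Im p0"
      by (elim exE conjE)
    then show ?thesis using that[of "Im p0"] Im_sub[of p0] Q by blast
  next
    case False
    then show ?thesis using that[of "{0}"] v(2) zero_in_V[OF mQ] by auto
  qed
  obtain H0 where H0: "G \<subseteq> H0" "line_complement (V m) v H0"
    using line_complement_exists[OF G(1,2) subspace_V[OF mQ] vV G(3)] by blast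
  define Ld where "Ld = {p\<in>Q. v \<in> Im p}"
  have Ld: "Ld \<subseteq> Q" "m \<in> Ld" "\<And>p. p \<in> Ld \<Longrightarrow> p \<le> m" "\<And>p. p \<in> Ld \<Longrightarrow> v \<in> f p m ` V p"
    using mQ Im_m vV top unfolding Ld_def Im_def by auto
  have "branches_only_at Ld m"
    by (rule branches_only_at_subset[OF wedge_branches_only_at[OF wedge]]) (use Ld(1) Q in simp)
  then have "\<exists>x. (\<forall>p\<in>Ld. x p \<in> V p \<and> f p m (x p) = v) \<and>
      (\<forall>p\<in>Ld. \<forall>p'\<in>Ld. p \<le> p' \<longrightarrow> f p p' (x p) = x p')"
    by (intro coherent_preimages_exist[OF Ld(1,2) _ _ vV v(2)]) (auto intro: Ld(3,4))
  then obtain x where x: "\<forall>p\<in>Ld. x p \<in> V p \<and> f p m (x p) = v"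
    "\<forall>p\<in>Ld. \<forall>p'\<in>Ld. p \<le> p' \<longrightarrow> f p p' (x p) = x p'"
    by (elim exE conjE) (rule that)
  show ?thesis
  proof (rule interval_module_if_lift_and_hyperplanes
        [where Ld = Ld and x = x and Lu = "{m}" and Hs = "\<lambda>_. H0",
        OF mQ vV v(2)])
    show "f p m ` V p \<subseteq> H0" if "p \<in> Q" "p \<le> m" "p \<notin> Ld" for p
    proof -
      have "v \<notin> Im p" using that unfolding Ld_def by blast
      moreover have "p \<in> A \<or> p \<in> B" using that Q by blast
      ultimately have "Im p \<subseteq> G"
      proof (elim disjE)
        assume "p \<in> A"
        then have "Im p = {0}" using least v(1) \<open>v \<notin> Im p\<close> by blast
        then show ?thesis using G(1) subspace_0 by simp
      qed (rule G(4))
      then show ?thesis using H0(1) unfolding Im_def by blast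
    qed
    show "line_complement (V p) (f m p v) H0" if "p \<in> {m}" for p
      using that H0(2) map_id[OF mQ vV] by simp
    show "f p p' ` H0 \<subseteq> H0" if "p \<in> {m}" "p' \<in> {m}" for p p'
      using that map_id[OF mQ] line_complementD(2)[OF H0(2)] by auto
    show "f m p v = 0" if "p \<in> Q" "m \<le> p" "p \<notin> {m}" for p
      using antisym[OF top[OF that(1)] that(2)] that(3) by simp
    show "x p \<in> V p" "f p m (x p) = v" if "p \<in> Ld" for p using x(1) that by blast+
    show "f p p' (x p) = x p'" if "p \<in> Ld" "p' \<in> Ld" "p \<le> p'" for p p' using x(2) that by blast
    show "p \<le> m \<or> m \<le> p \<or> V p = {0}" if "p \<in> Q" for p using top[OF that] by blast
    show "p \<le> m" if "p \<in> Ld" for p using Ld(3)[OF that] .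
  qed (use Ld(1,2) mQ indec in auto)
qed

lemma interval_module_if_wedge_with_bottom:
  assumes indec: "indecomposable scale Q V f" and Q: "Q = A \<union> B" and wedge: "wedge A B m"
    and bottom: "\<And>p. p \<in> Q \<Longrightarrow> m \<le> p" and Vm: "V m \<noteq> {0}"
  shows is_interval_module
proof -
  have mQ: "m \<in> Q" and chA: "Complete_Partial_Order.chain (\<le>) A"
    and chB: "Complete_Partial_Order.chain (\<le>) B"
    using wedge Q unfolding wedge_def by blast+
  define K where "K p = {z\<in>V m. f m p z = 0}" for p
  have K_sub: "subspace (K p) \<and> K p \<subseteq> V m" if "p \<in> Q" for p
    using subspace_map_preimage[OF mQ that bottom[OF that] subspace_single_0]
    unfolding K_def by auto
  have K_cmp: "K p \<subseteq> K p' \<or> K p' \<subseteq> K p" if "p \<in> Q" "p' \<in> Q" "p \<le> p' \<or> p' \<le> p" for p p'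
    using that map_kernel_mono[OF mQ] bottom unfolding K_def by blast
  have K_m: "K m = {0}" unfolding K_def using map_id[OF mQ] zero_in_V[OF mQ] by auto
(* H0 contains the greatest proper kernel along A, and v lies in the least kernel along B
     that H0 does not contain. *)
  have "\<exists>pA. (pA \<in> A \<and> K pA \<noteq> V m) \<and> (\<forall>p. p \<in> A \<and> K p \<noteq> V m \<longrightarrow> K p \<subseteq> K pA)"
  proof (rule chain_of_subspaces_of_V_has_greatest[OF mQ])
    show "m \<in> A \<and> K m \<noteq> V m" using wedge K_m Vm unfolding wedge_def by simp
  qed (use K_sub K_cmp chA Q in \<open>auto simp: chain_def\<close>)
  then obtain pA where pA: "pA \<in> A" "K pA \<noteq> V m"
    and greatest: "\<forall>p. p \<in> A \<and> K p \<noteq> V m \<longrightarrow> K p \<subseteq> K pA"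
    by (elim exE conjE) (rule that)
  have KA: "subspace (K pA)" "K pA \<subseteq> V m" using K_sub[of pA] pA(1) Q by blast+
  then obtain w0 where w0: "w0 \<in> V m" "w0 \<notin> K pA" using pA(2) by blast
  obtain H0 where H0: "K pA \<subseteq> H0" "line_complement (V m) w0 H0"
    using line_complement_exists[OF KA subspace_V[OF mQ] w0] by blast
  obtain v where v: "v \<in> V m" "v \<notin> H0" "\<And>p. p \<in> B \<Longrightarrow> \<not> K p \<subseteq> H0 \<Longrightarrow> v \<in> K p"
  proof (cases "\<exists>p\<in>B. \<not> K p \<subseteq> H0")
    case True
    then obtain p1 where "p1 \<in> B" "\<not> K p1 \<subseteq> H0" by blast
    then have "\<exists>p0. (p0 \<in> B \<and> \<not> K p0 \<subseteq> H0) \<and> (\<forall>p. p \<in> B \<and> \<not> K p \<subseteq> H0 \<longrightarrow> K p0 \<subseteq> K p)"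
      by (intro chain_of_subspaces_of_V_has_least[OF mQ])
        (use K_sub K_cmp chB Q in \<open>auto simp: chain_def\<close>)
    then obtain p0 where p0: "p0 \<in> B" "\<not> K p0 \<subseteq> H0" "\<forall>p. p \<in> B \<and> \<not> K p \<subseteq> H0 \<longrightarrow> K p0 \<subseteq> K p"
      by (elim exE conjE)
    then obtain v' where "v' \<in> K p0" "v' \<notin> H0" by blast
    moreover have "v' \<in> V m" using \<open>v' \<in> K p0\<close> unfolding K_def by blast
    ultimately show ?thesis using that[of v'] p0(3) by blast
  next
    case False
    then show ?thesis using that[of w0] w0(1) line_complementD(3)[OF H0(2)] by blast
  qed
  have H0_v: "line_complement (V m) v H0" using line_complement_swap[OF H0(2) v(1,2)] .
  have "v \<noteq> 0" using v(2) subspace_0[OF line_complementD(1)[OF H0_v]] by blast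
  have K_in_H0: "K p \<subseteq> H0" if "p \<in> Q" "f m p v \<noteq> 0" for p
  proof -
    have "v \<notin> K p" using that(2) unfolding K_def by blast
    moreover have "p \<in> A \<or> p \<in> B" using that(1) Q by blast
    ultimately show ?thesis
    proof (elim disjE)
      assume "p \<in> A"
      then have "K p \<subseteq> K pA" using greatest v(1) \<open>v \<notin> K p\<close> by blast
      then show ?thesis using H0(1) by blast
    qed (use v(3) in blast)
  qed
  define Lu where "Lu = {p\<in>Q. f m p v \<noteq> 0}"
  have Lu: "Lu \<subseteq> Q" "m \<in> Lu" "\<And>p. p \<in> Lu \<Longrightarrow> m \<le> p"
    using mQ map_id[OF mQ v(1)] \<open>v \<noteq> 0\<close> bottom unfolding Lu_def by auto
  have "branches_only_at Lu m"
    by (rule branches_only_at_subset[OF wedge_branches_only_at[OF wedge]]) (use Lu(1) Q in simp)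
  moreover have H0_kernels: "z \<in> H0" if "r \<in> Lu" "z \<in> V m" "f m r z = 0" for r z
    using that K_in_H0 unfolding Lu_def K_def by blast
  ultimately have "\<exists>Hs. Hs m = H0 \<and> (\<forall>p\<in>Lu. line_complement (V p) (f m p v) (Hs p)) \<and>
      (\<forall>p\<in>Lu. \<forall>p'\<in>Lu. p \<le> p' \<longrightarrow> f p p' ` Hs p \<subseteq> Hs p')"
    by (intro coherent_hyperplanes_exist[OF Lu(1,2) _ _ v(1) H0_v]) (auto intro: Lu(3) H0_kernels)
  then obtain Hs where Hs: "Hs m = H0" "\<forall>p\<in>Lu. line_complement (V p) (f m p v) (Hs p)"
    "\<forall>p\<in>Lu. \<forall>p'\<in>Lu. p \<le> p' \<longrightarrow> f p p' ` Hs p \<subseteq> Hs p'"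
    by (elim exE conjE) (rule that)
  show ?thesis
  proof (rule interval_module_if_lift_and_hyperplanes
        [where Ld = "{m}" and x = "\<lambda>_. v" and Lu = Lu and Hs = Hs,
        OF mQ v(1) \<open>v \<noteq> 0\<close>])
    show "f p m ` V p \<subseteq> Hs m" if "p \<in> Q" "p \<le> m" "p \<notin> {m}" for p
      using antisym[OF that(2) bottom[OF that(1)]] that(3) by simp
    show "f m p v = 0" if "p \<in> Q" "m \<le> p" "p \<notin> Lu" for p
      using that unfolding Lu_def by blast
    show "v \<in> V p" "f p m v = v" if "p \<in> {m}" for p using that v(1) map_id[OF mQ v(1)] by simp_all
    show "f p p' v = v" if "p \<in> {m}" "p' \<in> {m}" "p \<le> p'" for p p'
      using that map_id[OF mQ v(1)] by simp
    show "line_complement (V p) (f m p v) (Hs p)" if "p \<in> Lu" for p using Hs(2) that by blast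
    show "f p p' ` Hs p \<subseteq> Hs p'" if "p \<in> Lu" "p' \<in> Lu" "p \<le> p'" for p p' using Hs(3) that by blast
    show "p \<le> m \<or> m \<le> p \<or> V p = {0}" if "p \<in> Q" for p using bottom[OF that] by blast
    show "m \<le> p" if "p \<in> Lu" for p using Lu(3)[OF that] .
  qed (use Lu(1,2) mQ indec in auto)
qed

lemma indecomposable_supported_on_one_arm:
  assumes indec: "indecomposable scale Q V f" and Q: "Q = A \<union> B" and wedge: "wedge A B m"
    and Vm: "V m = {0}"
  shows "(\<forall>p\<in>Q. V p \<noteq> {0} \<longrightarrow> p \<in> A) \<or> (\<forall>p\<in>Q. V p \<noteq> {0} \<longrightarrow> p \<in> B)"
proof -
  have crossing: "a = m \<or> b = m" if "a \<in> A" "b \<in> B" "a \<le> b \<or> b \<le> a" for a b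
    using wedge that unfolding wedge_def by blast
  have "m \<in> A" using wedge unfolding wedge_def by blast
  define P1 where "P1 p = (if p \<in> A then V p else {0})" for p
  define P2 where "P2 p = (if p \<in> A then {0} else V p)" for p
  have P_0: "0 \<in> P1 p" "0 \<in> P2 p" if "p \<in> Q" for p
    unfolding P1_def P2_def using zero_in_V[OF that] by simp_all
  have "submod scale Q V f P1" "submod scale Q V f P2"
    unfolding submod_def
  proof (safe intro!: ballI)
    fix p assume p: "p \<in> Q"
    show "subspace (P1 p)" "subspace (P2 p)"
      unfolding P1_def P2_def using subspace_V[OF p] subspace_single_0 by simp_all
    show "z \<in> V p" if "z \<in> P1 p" for z
      using that zero_in_V[OF p] unfolding P1_def by (simp split: if_splits)
    show "z \<in> V p" if "z \<in> P2 p" for z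
      using that zero_in_V[OF p] unfolding P2_def by (simp split: if_splits)
  next
    fix p r z assume pr: "p \<in> Q" "r \<in> Q" "p \<le> r" and z: "z \<in> P1 p"
    consider "p \<notin> A" | "p \<in> A" "r \<in> A" | "p \<in> A" "r \<notin> A" by blast
    then show "f p r z \<in> P1 r"
    proof cases
      case 1
      then show ?thesis using z map_zero[OF pr] P_0[OF pr(2)] unfolding P1_def by simp
    next
      case 2
      then show ?thesis using z map_in_V[OF pr] unfolding P1_def by simp
    next
      case 3
      then have "r \<in> B" using pr(2) unfolding Q by blast
      then have "p = m" using crossing[of p r] pr(3) 3 \<open>m \<in> A\<close> by blast
      then show ?thesis using z Vm 3(1) map_zero[OF pr] P_0[OF pr(2)] unfolding P1_def by simp
    qed
  next
    fix p r z assume pr: "p \<in> Q" "r \<in> Q" "p \<le> r" and z: "z \<in> P2 p"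
    consider "p \<in> A" | "p \<notin> A" "r \<notin> A" | "p \<notin> A" "r \<in> A" by blast
    then show "f p r z \<in> P2 r"
    proof cases
      case 1
      then show ?thesis using z map_zero[OF pr] P_0[OF pr(2)] unfolding P2_def by simp
    next
      case 2
      then show ?thesis using z map_in_V[OF pr] unfolding P2_def by simp
    next
      case 3
      then have "p \<in> B" using pr(1) unfolding Q by blast
      then have "r = m" using crossing[of r p] pr(3) 3 \<open>m \<in> A\<close> by blast
      then have "f p r z = 0" using z 3(1) map_in_V[OF pr] Vm unfolding P2_def by simp
      then show ?thesis using P_0[OF pr(2)] by simp
    qed
  qed
  moreover have "\<exists>a\<in>P1 p. \<exists>b\<in>P2 p. z = a + b" if "p \<in> Q" "z \<in> V p" for p z
  proof (cases "p \<in> A")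
    case True
    then show ?thesis
      using that P_0[OF that(1)] unfolding P1_def by (intro bexI[of _ z] bexI[of _ 0]) auto
  next
    case False
    then show ?thesis
      using that P_0[OF that(1)] unfolding P2_def by (intro bexI[of _ 0] bexI[of _ z]) auto
  qed
  moreover have "P1 p \<inter> P2 p = {0}" if "p \<in> Q" for p
    using P_0[OF that] unfolding P1_def P2_def by auto
  ultimately have "(\<forall>p\<in>Q. P1 p = {0}) \<or> (\<forall>p\<in>Q. P2 p = {0})"
    using indecomposableD[OF indec] by blast
  then show ?thesis unfolding P1_def P2_def Q by (metis Un_iff)
qed

lemma interval_module_if_wedge:
  assumes indec: "indecomposable scale Q V f" and Q: "Q = A \<union> B" and wedge: "wedge A B m"
    and extreme: "(\<forall>p\<in>Q. p \<le> m) \<or> (\<forall>p\<in>Q. m \<le> p)"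
  shows is_interval_module
proof (cases "V m = {0}")
  case True
  then consider "\<forall>p\<in>Q. V p \<noteq> {0} \<longrightarrow> p \<in> A" | "\<forall>p\<in>Q. V p \<noteq> {0} \<longrightarrow> p \<in> B"
    using indecomposable_supported_on_one_arm[OF indec Q wedge] by blast
  then show ?thesis
    using interval_module_if_supported_on_chain[OF indec] wedge unfolding wedge_def by cases blast+
next
  case False
  then show ?thesis
    using extreme interval_module_if_wedge_with_top[OF indec Q wedge _ False]
      interval_module_if_wedge_with_bottom[OF indec Q wedge _ False] by blast
qed

end

theorem lemma5p3:
  fixes sc :: "'k::field \<Rightarrow> 'v::ab_group_add \<Rightarrow> 'v"
    and x :: "'s::linorder" and y :: "'t::linorder"
    and Q :: "('s \<times> 't) set"
    and V :: "'s \<times> 't \<Rightarrow> 'v set"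
    and f :: "'s \<times> 't \<Rightarrow> 's \<times> 't \<Rightarrow> 'v \<Rightarrow> 'v"
  assumes "vector_space sc"
    and "Q = cross_down x y \<or> Q = cross_up x y"
    and "pmod sc Q V f"
    and "pfd sc Q V"
    and "indecomposable sc Q V f"
  shows "\<exists>I. is_interval Q I \<and>
           pmod_iso sc Q V f ((*) :: 'k \<Rightarrow> 'k \<Rightarrow> 'k) (kI_space I) (kI_map I)"
proof -
  interpret pfd_module sc Q V f
    using assms(1,3,4) by (intro pfd_module.intro pfd_module_axioms.intro)
  from assms(2) show ?thesis
  proof
    assume down: "Q = cross_down x y"
    then have "\<forall>p\<in>Q. p \<le> (x, y)" unfolding cross_down_def less_eq_prod_def by auto
    then show ?thesis
      using interval_module_if_wedge[OF assms(5) down[unfolded cross_down_def] wedge_cross_down]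
      by blast
  next
    assume up: "Q = cross_up x y"
    then have "\<forall>p\<in>Q. (x, y) \<le> p" unfolding cross_up_def less_eq_prod_def by auto
    then show ?thesis
      using interval_module_if_wedge[OF assms(5) up[unfolded cross_up_def] wedge_cross_up] by blast
  qed
qed

end
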